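(* Let $\sigma:[0,\infty)\to[0,\infty)$ be nondecreasing with $\lim_{t\to\infty}\sigma(t)=\infty$ and let $\beta\ge0$. Take $a\ge0$ such that $\sigma(x)>0$ for all $x\ge a$ and $\sigma(x)=0$ for every $x\le\lceil a\rceil-1$. Then the following are equivalent: (i) there exists $C>0$ such that $\int_1^{y}\frac{\sigma(t)}{t^{\beta+1}}\,dt\le C\frac{\sigma(y)}{y^{\beta}}$ for all $y\ge1$; (ii) $\lim_{k\to\infty}\liminf_{t\to\infty}\frac{\sigma(kt)}{k^{\beta}\sigma(t)}=\infty$; (iii) there exists $K>1$ such that $\liminf_{t\to\infty}\frac{\sigma(Kt)}{\sigma(t)}>K^{\beta}$; (iv) $\beta(\sigma)>\beta$; (v) there exists $\gamma>\beta$ such that $t\mapsto\sigma(t)/t^{\gamma}$ is almost increasing in $[a,\infty)$ if $a>0$, and in $[\varepsilon,\infty)$ for all $\varepsilon>0$ if $a=0$; (vi) there exists $C>0$ such that $\frac{1}{y^{\beta}}\int_y^{\infty}\frac{t^{\beta-1}}{\sigma(t)}\,dt\le\frac{C}{\sigma(y)}$ for all $y\ge a$ if $a>0$, and for all $y\ge\varepsilon$ if $a=0$, where $\varepsilon>0$ is arbitrary but fixed and $C$ depends on $\varepsilon$; (vii) there exists $C>0$ such that $\sum_{k=p}^{\infty}\frac{k^{\beta-1}}{\sigma(k)}\le C\frac{p^{\beta}}{\sigma(p)}$ for every $p\in\mathbb{N}$ with $p\ge a$; (viii) for every $\theta\in(0,1)$ there exists $k\in\mathbb{N}$, $k\ge2$,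 such that $\sigma(p)\le\theta k^{-\beta}\sigma(kp)$ for every $p\in\mathbb{N}$; (ix) there exists $k\in\mathbb{N}$, $k\ge2$, such that $\liminf_{p\in\mathbb{N},\,p\to\infty}\frac{\sigma(kp)}{\sigma(p)}>k^{\beta}$; (x) there exists $C>0$ such that $\sum_{k=1}^{p}\frac{\sigma(k)}{k^{1+\beta}}\le C\frac{\sigma(p)}{p^{\beta}}$ for every $p\in\mathbb{N}$.
   Context: $\mathbb{N}=\{1,2,\dots\}$, $\lceil x\rceil=\min\{k\in\mathbb{Z}:x\le k\}$. A function $h$ on $[a,\infty)$ is almost increasing if there is $M>0$ with $h(x)\le M h(y)$ for all $a\le x\le y$. For a measurable positive function $f$ on some $[A,\infty)$, its lower Matuszewska index is $\beta(f):=\sup\{\beta\in\mathbb{R}:\exists D_\beta>0\ \forall\Lambda>1,\ \liminf_{x\to\infty}\inf_{\lambda\in[1,\Lambda]}\frac{f(\lambda x)}{\lambda^{\beta}f(x)}\ge D_\beta\}$ (with $\sup\emptyset=-\infty$); for $\sigma$ as in the claim, $\beta(\sigma)$ means the index of the restriction of $\sigma$ to any $[A,\infty)$ with $A>0$ on which $\sigma>0$ (independent of $A$). *)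

theory Defs
  imports "HOL-Analysis.Analysis"
begin

definition almost_increasing_on :: "real set \<Rightarrow> (real \<Rightarrow> real) \<Rightarrow> bool" where
  "almost_increasing_on S h \<longleftrightarrow>
     (\<exists>M>0. \<forall>x\<in>S. \<forall>y\<in>S. x \<le> y \<longrightarrow> h x \<le> M * h y)"

text \<open>Lower Matuszewska index (with sup of the empty set = -infinity, hence in ereal).\<close>
definition lower_matuszewska :: "(real \<Rightarrow> real) \<Rightarrow> ereal" where
  "lower_matuszewska f = Sup {ereal b | b. \<exists>D>0. \<forall>\<Lambda>>1.
       Liminf at_top (\<lambda>x. INF l\<in>{1..\<Lambda>}. ereal (f (l * x) / (l powr b * f x))) \<ge> ereal D}"

end

theory Submission
  imports Defs
begin

text \<open>
  All ten conditions are equivalent to a \<^emph>\<open>dilation gain\<close>: for some \<open>K > 1\<close> and \<open>c > 1\<close>,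
  \<open>\<sigma> (K t) \<ge> c K\<^sup>\<beta> \<sigma> t\<close> for all large \<open>t\<close>. Iterating the gain shows that \<open>\<sigma> t / t\<^sup>\<gamma>\<close> is almost
  increasing for \<open>\<gamma> = \<beta> + log\<^sub>K c\<close>; conversely, if \<open>\<sigma> t / t\<^sup>\<gamma>\<close> is almost increasing for some
  \<open>\<gamma> > \<beta>\<close>, then \<open>\<sigma> (k t) \<ge> k\<^sup>\<gamma> \<sigma> t / M\<close>, and the ratio, index, integral and sum conditions
  follow by comparison with powers of \<open>t\<close>.

  The integral and sum conditions give the gain back by a doubling argument. For the
  partial integral \<open>A x = \<integral>\<^sub>1\<^sup>x \<sigma> t / t\<^sup>\<beta>\<^sup>+\<^sup>1 dt\<close>, the bound \<open>A x \<le> C \<sigma> x / x\<^sup>\<beta>\<close> together with the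
  increment \<open>A (2x) - A x \<ge> g \<sigma> x / x\<^sup>\<beta>\<close>, \<open>g = 2\<^sup>-\<^sup>\<beta>\<^sup>-\<^sup>1\<close>, forces \<open>A\<close> and hence \<open>\<sigma> x / x\<^sup>\<beta>\<close>
  to grow geometrically along \<open>x, 2x, 4x, \<dots>\<close>; the tail integrals and the two sums are
  handled in the same way.
\<close>

section \<open>Elementary estimates for real powers\<close>

lemma powr_eventually_ge:
  fixes d R :: real
  assumes d: "d > 0"
  shows "\<exists>X\<ge>1. \<forall>x\<ge>X. R \<le> x powr d"
proof -
  define X where "X = max 1 (\<bar>R\<bar> powr (1/d))"
  have "R \<le> x powr d" if x: "x \<ge> X" for x
  proof -
    have "\<bar>R\<bar> = (\<bar>R\<bar> powr (1/d)) powr d"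
      using d by (cases "R = 0") (auto simp: powr_powr)
    also have "\<dots> \<le> x powr d"
      using x d unfolding X_def by (intro powr_mono2) auto
    finally show ?thesis by linarith
  qed
  then show ?thesis unfolding X_def by (intro exI[of _ X]) (auto simp: X_def)
qed

lemma powr_mean_value:
  fixes x y r :: real
  assumes "0 < x" "x < y"
  obtains \<xi> where "x < \<xi>" "\<xi> < y" "y powr r - x powr r = (y - x) * (r * \<xi> powr (r - 1))"
proof -
  have "\<exists>\<xi>. x < \<xi> \<and> \<xi> < y \<and> y powr r - x powr r = (y - x) * (r * \<xi> powr (r - 1))"
  proof (rule MVT2[OF assms(2)])
    fix z assume "x \<le> z" "z \<le> y"
    with assms have "z > 0" by auto
    then show "((\<lambda>t. t powr r) has_real_derivative r * z powr (r - 1)) (at z)"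
      by (rule has_real_derivative_powr)
  qed
  with that show ?thesis by blast
qed

lemma powr_diff_ge_derivative:
  fixes x d :: real
  assumes d: "0 < d" "d \<le> 1" and x: "x \<ge> 1"
  shows "d * x powr (d - 1) \<le> x powr d - (x - 1) powr d"
proof (cases "x = 1")
  case True
  with d show ?thesis by simp
next
  case False
  with x have "0 < x - 1" by simp
  then obtain \<xi> where \<xi>: "x - 1 < \<xi>" "\<xi> < x"
    and eq: "x powr d - (x - 1) powr d = (x - (x - 1)) * (d * \<xi> powr (d - 1))"
    using powr_mean_value[of "x - 1" x d] by auto
  have "x powr (d - 1) \<le> \<xi> powr (d - 1)"
    using \<xi> \<open>0 < x - 1\<close> d by (intro powr_mono2') auto
  with eq d show ?thesis by simp
qed

lemma sum_powr_le:
  fixes d :: real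
  assumes d: "0 < d" "d \<le> 1"
  shows "(\<Sum>k=1..p. real k powr (d - 1)) \<le> real p powr d / d"
proof (induction p)
  case 0
  then show ?case by simp
next
  case (Suc p)
  have "(\<Sum>k=1..Suc p. real k powr (d - 1)) = (\<Sum>k=1..p. real k powr (d - 1)) + real (Suc p) powr (d - 1)"
    by simp
  also have "\<dots> \<le> real p powr d / d + (real (Suc p) powr d - real p powr d) / d"
    using Suc powr_diff_ge_derivative[OF d, of "real (Suc p)"] d by (simp add: field_simps)
  also have "\<dots> = real (Suc p) powr d / d"
    using d by (simp add: field_simps)
  finally show ?case .
qed

lemma powr_le_telescoping:
  fixes t d :: real
  assumes d: "0 < d" and t: "t \<ge> 1"
  shows "t powr (- d - 1) \<le> 2 powr (d + 1) / d * (t powr (- d) - (t + 1) powr (- d))"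
proof -
  obtain \<xi> where \<xi>: "t < \<xi>" "\<xi> < t + 1"
    and eq: "(t + 1) powr (- d) - t powr (- d) = (t + 1 - t) * (- d * \<xi> powr (- d - 1))"
    using powr_mean_value[of t "t + 1" "- d"] t by auto
  have "(2 * t) powr (- d - 1) \<le> (t + 1) powr (- d - 1)"
    using t d by (intro powr_mono2') auto
  also have "\<dots> \<le> \<xi> powr (- d - 1)"
    using \<xi> t d by (intro powr_mono2') auto
  finally have "2 powr (- d - 1) * t powr (- d - 1) \<le> \<xi> powr (- d - 1)"
    by (simp add: powr_mult)
  then have "2 powr (d + 1) * (2 powr (- d - 1) * t powr (- d - 1)) \<le> 2 powr (d + 1) * \<xi> powr (- d - 1)"
    by (intro mult_left_mono) auto
  moreover have "2 powr (d + 1) * 2 powr (- d - 1) = (1::real)"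
    by (simp flip: powr_add)
  moreover have "\<xi> powr (- d - 1) = (t powr (- d) - (t + 1) powr (- d)) / d"
    using eq d by (simp add: field_simps)
  ultimately show ?thesis
    by (simp add: mult.assoc[symmetric])
qed

lemma powr_ge_half_on_doubling_interval:
  fixes N t b :: real
  assumes N: "N > 0" and t: "N \<le> t" "t \<le> 2 * N" and b: "b \<ge> 0"
  shows "N powr (b - 1) / 2 \<le> t powr (b - 1)"
proof (cases "b \<ge> 1")
  case True
  then have "N powr (b - 1) \<le> t powr (b - 1)"
    using N t by (intro powr_mono2) auto
  then show ?thesis
    using powr_ge_zero[of N "b - 1"] by linarith
next
  case False
  have half: "1 / 2 \<le> 2 powr (b - 1)"
    using b powr_mono[of "-1" "b - 1" 2] by (simp add: powr_minus)
  have "N powr (b - 1) / 2 \<le> 2 powr (b - 1) * N powr (b - 1)"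
    using mult_right_mono[OF half powr_ge_zero[of N "b - 1"]] by simp
  also have "\<dots> = (2 * N) powr (b - 1)"
    by (simp add: powr_mult)
  also have "\<dots> \<le> t powr (b - 1)"
    using False N t by (intro powr_mono2') auto
  finally show ?thesis .
qed

lemma has_integral_powr_from_1:
  fixes d y :: real
  assumes d: "d > 0" and y: "1 \<le> y"
  shows "((\<lambda>t. t powr (d - 1)) has_integral (y powr d / d - 1 / d)) {1..y}"
proof -
  have "((\<lambda>t. t powr (d - 1)) has_integral ((\<lambda>x. x powr d / d) y - (\<lambda>x. x powr d / d) 1)) {1..y}"
    using assms
    by (intro fundamental_theorem_of_calculus)
       (auto intro!: derivative_eq_intros simp: field_simps powr_diff
             simp flip: has_real_derivative_iff_has_vector_derivative)
  then show ?thesis by simp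
qed

lemma has_integral_powr_tail:
  fixes y \<delta> :: real
  assumes "\<delta> > 0" "y > 0"
  shows "((\<lambda>t. t powr (- \<delta> - 1)) has_integral (y powr (- \<delta>) / \<delta>)) {y..}"
  using has_integral_powr_to_inf[of "- \<delta> - 1" y] assms by simp

lemma suminf_le_telescoping:
  fixes f G :: "nat \<Rightarrow> real"
  assumes G: "G \<longlonglongrightarrow> 0" and f: "\<And>j. 0 \<le> f j" "\<And>j. f j \<le> G j - G (Suc j)"
  shows "summable f" "suminf f \<le> G 0"
proof -
  have tel: "(\<lambda>j. G j - G (Suc j)) sums (G 0 - 0)"
    by (rule telescope_sums'[OF G])
  show "summable f"
    using f by (intro summable_comparison_test'[OF sums_summable[OF tel]]) auto
  then have "suminf f \<le> (\<Sum>j. G j - G (Suc j))"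
    using f sums_summable[OF tel] by (intro suminf_le) auto
  with tel show "suminf f \<le> G 0"
    by (simp add: sums_iff)
qed

section \<open>Geometric growth from doubling estimates\<close>

lemma geometric_growth_from_increments:
  fixes A U :: "nat \<Rightarrow> real"
  assumes C: "C > 0" and g: "g > 0" and AU: "\<And>n. A n \<le> C * U n"
    and step: "\<And>n. A n + g * U n \<le> A (Suc n)" and A0: "A 0 \<ge> 0"
  shows "(1 + g/C)^n * (g/C) * U 0 \<le> U (Suc n)"
proof -
  have gU: "(g/C) * A n \<le> g * U n" for n
    using AU[of n] C g by (simp add: field_simps mult_left_mono)
  have A_nonneg: "A n \<ge> 0" for n
  proof (induction n)
    case (Suc n)
    with C g have "(g/C) * A n \<ge> 0" by auto
    with Suc step[of n] gU[of n] show ?case by linarith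
  qed (use A0 in simp)
  have grow: "(1 + g/C)^n * A 1 \<le> A (Suc n)" for n
  proof (induction n)
    case (Suc n)
    have "(1 + g/C)^Suc n * A 1 = (1 + g/C) * ((1 + g/C)^n * A 1)"
      by simp
    also have "\<dots> \<le> (1 + g/C) * A (Suc n)"
      using Suc C g by (intro mult_left_mono) auto
    also have "\<dots> \<le> A (Suc (Suc n))"
      using step[of "Suc n"] gU[of "Suc n"] by (simp add: algebra_simps)
    finally show ?case .
  qed simp
  have "(1 + g/C)^n * (g/C) * U 0 = ((1 + g/C)^n * (g * U 0)) / C"
    using C by simp
  also have "\<dots> \<le> ((1 + g/C)^n * A 1) / C"
    using step[of 0] A0 C g by (intro divide_right_mono mult_left_mono) auto
  also have "\<dots> \<le> A (Suc n) / C"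
    using grow[of n] C by (intro divide_right_mono) auto
  also have "\<dots> \<le> U (Suc n)"
    using AU[of "Suc n"] C by (simp add: field_simps)
  finally show ?thesis .
qed

lemma geometric_decay_from_tails:
  fixes B V :: "nat \<Rightarrow> real"
  assumes C: "C > 0" and g: "g > 0" and BV: "\<And>n. B n \<le> C * V n"
    and step: "\<And>n. B (Suc n) + g * V (Suc n) \<le> B n" and B_nonneg: "\<And>n. B n \<ge> 0"
  shows "(1 + g/C)^n * (g/C) * V (Suc n) \<le> V 0"
proof -
  have gV: "(g/C) * B n \<le> g * V n" for n
    using BV[of n] C g by (simp add: field_simps mult_left_mono)
  have shrink: "(1 + g/C)^n * B n \<le> B 0" for n
  proof (induction n)
    case (Suc n)
    have "(1 + g/C) * B (Suc n) \<le> B n"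
      using step[of n] gV[of "Suc n"] by (simp add: algebra_simps)
    then have "(1 + g/C)^n * ((1 + g/C) * B (Suc n)) \<le> (1 + g/C)^n * B n"
      using C g by (intro mult_left_mono) auto
    with Suc show ?case
      by (simp add: mult_ac)
  qed simp
  have "(1 + g/C)^n * (g * V (Suc n)) \<le> (1 + g/C)^n * B n"
    using step[of n] B_nonneg[of "Suc n"] C g by (intro mult_left_mono) auto
  also have "\<dots> \<le> C * V 0"
    using shrink[of n] BV[of 0] by linarith
  finally show ?thesis
    using C by (simp add: field_simps)
qed

lemma geometric_exceeds:
  fixes g C R :: real
  assumes "C > 0" "g > 0"
  obtains n where "R < (1 + g/C)^n * (g/C)"
proof -
  have "1 < 1 + g/C" using assms by auto
  from real_arch_pow[OF this, of "R / (g/C)"] obtain n where "R / (g/C) < (1 + g/C)^n" by blast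
  with assms that show ?thesis by (simp add: field_simps)
qed

section \<open>Almost increasing functions\<close>

lemma almost_increasing_on_subset:
  "almost_increasing_on S h \<Longrightarrow> T \<subseteq> S \<Longrightarrow> almost_increasing_on T h"
  unfolding almost_increasing_on_def by blast

lemma almost_increasing_on_smaller_exponent:
  fixes f :: "real \<Rightarrow> real"
  assumes ai: "almost_increasing_on S (\<lambda>t. f t / t powr \<gamma>)"
    and S: "S \<subseteq> {0<..}" and f: "\<forall>t\<in>S. 0 \<le> f t" and \<gamma>: "\<gamma>' \<le> \<gamma>"
  shows "almost_increasing_on S (\<lambda>t. f t / t powr \<gamma>')"
proof -
  obtain M where M: "M > 0"
    "\<And>x y. x \<in> S \<Longrightarrow> y \<in> S \<Longrightarrow> x \<le> y \<Longrightarrow> f x / x powr \<gamma> \<le> M * (f y / y powr \<gamma>)"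
    using ai unfolding almost_increasing_on_def by blast
  show ?thesis unfolding almost_increasing_on_def
  proof (intro exI[of _ M] conjI M(1) ballI impI)
    fix x y assume x: "x \<in> S" and y: "y \<in> S" and xy: "x \<le> y"
    have split: "f z / z powr \<gamma>' = (f z / z powr \<gamma>) * z powr (\<gamma> - \<gamma>')" if "z \<in> S" for z
      using that S by (auto simp: powr_diff)
    have "f x / x powr \<gamma>' \<le> M * (f y / y powr \<gamma>) * x powr (\<gamma> - \<gamma>')"
      unfolding split[OF x] by (intro mult_right_mono M(2) x y xy) auto
    also have "\<dots> \<le> M * (f y / y powr \<gamma>) * y powr (\<gamma> - \<gamma>')"
      using M(1) f x y xy S \<gamma> by (intro mult_left_mono powr_mono2) auto
    also have "\<dots> = M * (f y / y powr \<gamma>')"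
      unfolding split[OF y] by simp
    finally show "f x / x powr \<gamma>' \<le> M * (f y / y powr \<gamma>')" .
  qed
qed

lemma almost_increasing_on_glue:
  fixes h :: "real \<Rightarrow> real"
  assumes left: "almost_increasing_on {a..b} h" and right: "almost_increasing_on {b..} h"
    and ab: "a \<le> b" and h: "\<forall>x\<ge>a. 0 \<le> h x"
  shows "almost_increasing_on {a..} h"
proof -
  obtain M1 where M1: "M1 > 0" "\<forall>x\<in>{a..b}. \<forall>y\<in>{a..b}. x \<le> y \<longrightarrow> h x \<le> M1 * h y"
    using left unfolding almost_increasing_on_def by blast
  obtain M2 where M2: "M2 > 0" "\<forall>x\<in>{b..}. \<forall>y\<in>{b..}. x \<le> y \<longrightarrow> h x \<le> M2 * h y"
    using right unfolding almost_increasing_on_def by blast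
  define M where "M = max M1 1 * max M2 1"
  have M: "M1 \<le> M" "M2 \<le> M" "M1 * M2 \<le> M"
    unfolding M_def using M1(1) M2(1)
    by (auto intro: mult_mono order_trans[OF _ mult_right_mono[of 1 "max M1 1"]]
        order_trans[OF _ mult_left_mono[of 1 "max M2 1"]])
  show ?thesis unfolding almost_increasing_on_def
  proof (intro exI[of _ M] conjI ballI impI)
    show "M > 0"
      unfolding M_def by simp
    fix x y assume x: "x \<in> {a..}" and y: "y \<in> {a..}" and xy: "x \<le> y"
    have hy: "0 \<le> h y"
      using h y by auto
    consider "y \<le> b" | "b \<le> x" | "x < b" "b < y"
      by linarith
    then show "h x \<le> M * h y"
    proof cases
      case 1
      with M1(2) x y xy have "h x \<le> M1 * h y" by auto
      also have "\<dots> \<le> M * h y" using M hy by (intro mult_right_mono) auto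
      finally show ?thesis .
    next
      case 2
      with M2(2) xy have "h x \<le> M2 * h y" by auto
      also have "\<dots> \<le> M * h y" using M hy by (intro mult_right_mono) auto
      finally show ?thesis .
    next
      case 3
      with M1(2) x ab have "h x \<le> M1 * h b" by auto
      also have "\<dots> \<le> M1 * (M2 * h y)" using M2(2) 3 M1(1) by (intro mult_left_mono) auto
      also have "\<dots> \<le> M * h y" using M hy by (simp only: mult.assoc[symmetric]) (intro mult_right_mono)
      finally show ?thesis .
    qed
  qed
qed

lemma almost_increasing_on_from_dilation_step:
  fixes h :: "real \<Rightarrow> real"
  assumes K: "K > 1" and T: "T > 0" and M: "M > 0"
    and step: "\<And>x. T \<le> x \<Longrightarrow> h x \<le> h (K * x)"
    and near: "\<And>x y. T \<le> x \<Longrightarrow> x \<le> y \<Longrightarrow> y < K * x \<Longrightarrow> h x \<le> M * h y"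
  shows "almost_increasing_on {T..} h"
proof -
  have within_powers: "h x \<le> M * h y" if "T \<le> x" "x \<le> y" "y < K ^ n * x" for n x y
    using that
  proof (induction n arbitrary: x)
    case (Suc n)
    show ?case
    proof (cases "y < K * x")
      case True
      with Suc.prems near show ?thesis by blast
    next
      case False
      have "T \<le> K * x"
        using Suc.prems(1) K T by (smt (verit) mult_le_cancel_right1)
      moreover have "K * x \<le> y" "y < K ^ n * (K * x)"
        using False Suc.prems by (auto simp: mult_ac)
      ultimately have "h (K * x) \<le> M * h y"
        using Suc.IH by blast
      with step[OF Suc.prems(1)] show ?thesis
        by linarith
    qed
  qed simp
  show ?thesis unfolding almost_increasing_on_def
  proof (intro exI[of _ M] conjI M ballI impI)
    fix x y assume x: "x \<in> {T..}" and y: "y \<in> {T..}" and xy: "x \<le> y"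
    obtain n where "y / x < K ^ n"
      using real_arch_pow[OF K] by blast
    with x T have "y < K ^ n * x"
      by (simp add: divide_less_eq)
    with within_powers x xy show "h x \<le> M * h y"
      by auto
  qed
qed

section \<open>The dilation gain\<close>

locale growth_function =
  fixes \<sigma> :: "real \<Rightarrow> real" and \<beta> a :: real
  assumes mono: "mono_on {0..} \<sigma>"
    and nonneg: "\<forall>x\<ge>0. \<sigma> x \<ge> 0"
    and beta_nonneg: "\<beta> \<ge> 0"
    and pos: "\<forall>x\<ge>a. \<sigma> x > 0"
begin

lemma sigma_mono: "0 \<le> x \<Longrightarrow> x \<le> y \<Longrightarrow> \<sigma> x \<le> \<sigma> y"
  using mono by (auto simp: mono_on_def)

lemma sigma_nonneg: "0 \<le> x \<Longrightarrow> 0 \<le> \<sigma> x"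
  using nonneg by auto

lemma sigma_pos: "a \<le> x \<Longrightarrow> 0 < \<sigma> x"
  using pos by auto

definition dilation_gain :: bool where
  "dilation_gain \<longleftrightarrow> (\<exists>K>1. \<exists>c>1. \<exists>T>0. \<forall>t\<ge>T. c * K powr \<beta> * \<sigma> t \<le> \<sigma> (K * t))"

lemma dilation_gainI:
  assumes "K > 1" "c > 1" "T > 0" "\<And>t. t \<ge> T \<Longrightarrow> c * K powr \<beta> * \<sigma> t \<le> \<sigma> (K * t)"
  shows dilation_gain
  using assms unfolding dilation_gain_def by blast

definition almost_increasing_quotient :: bool where
  "almost_increasing_quotient \<longleftrightarrow>
     (\<exists>\<gamma>>\<beta>. \<forall>\<epsilon>>0. almost_increasing_on {\<epsilon>..} (\<lambda>t. \<sigma> t / t powr \<gamma>))"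

lemma quotient_le_scaled:
  assumes "0 < \<epsilon>" "\<epsilon> \<le> x" "x \<le> z" "0 \<le> \<gamma>"
  shows "\<sigma> x / x powr \<gamma> \<le> (z / \<epsilon>) powr \<gamma> * (\<sigma> z / z powr \<gamma>)"
proof -
  have "\<sigma> x / x powr \<gamma> \<le> \<sigma> z / \<epsilon> powr \<gamma>"
    using assms sigma_nonneg[of x] sigma_mono[of x z] by (intro frac_le) (auto intro: powr_mono2)
  also have "\<dots> = (z / \<epsilon>) powr \<gamma> * (\<sigma> z / z powr \<gamma>)"
    using assms by (simp add: powr_divide)
  finally show ?thesis .
qed

lemma almost_increasing_quotient_on_interval:
  assumes \<epsilon>: "\<epsilon> > 0" and \<gamma>: "\<gamma> \<ge> 0"
  shows "almost_increasing_on {\<epsilon>..T} (\<lambda>t. \<sigma> t / t powr \<gamma>)"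
  unfolding almost_increasing_on_def
proof (intro exI[of _ "max 1 ((T / \<epsilon>) powr \<gamma>)"] conjI ballI impI)
  fix x y assume x: "x \<in> {\<epsilon>..T}" and y: "y \<in> {\<epsilon>..T}" and xy: "x \<le> y"
  have "\<sigma> x / x powr \<gamma> \<le> (y / \<epsilon>) powr \<gamma> * (\<sigma> y / y powr \<gamma>)"
    using quotient_le_scaled \<epsilon> x xy \<gamma> by auto
  also have "\<dots> \<le> max 1 ((T / \<epsilon>) powr \<gamma>) * (\<sigma> y / y powr \<gamma>)"
    using \<epsilon> y \<gamma> sigma_nonneg[of y]
    by (intro mult_right_mono order_trans[OF _ max.cobounded2] powr_mono2 divide_right_mono) auto
  finally show "\<sigma> x / x powr \<gamma> \<le> max 1 ((T / \<epsilon>) powr \<gamma>) * (\<sigma> y / y powr \<gamma>)" .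
qed simp

lemma almost_increasing_quotient_extend:
  assumes \<gamma>: "\<gamma> \<ge> 0" and \<epsilon>: "\<epsilon> > 0"
    and ai: "almost_increasing_on {T..} (\<lambda>t. \<sigma> t / t powr \<gamma>)"
  shows "almost_increasing_on {\<epsilon>..} (\<lambda>t. \<sigma> t / t powr \<gamma>)"
proof (cases "T \<le> \<epsilon>")
  case True
  show ?thesis
    by (rule almost_increasing_on_subset[OF ai]) (use True in auto)
next
  case False
  show ?thesis
  proof (rule almost_increasing_on_glue[OF almost_increasing_quotient_on_interval[OF \<epsilon> \<gamma>] ai])
    show "\<forall>x\<ge>\<epsilon>. 0 \<le> \<sigma> x / x powr \<gamma>"
      using \<epsilon> sigma_nonneg by auto
  qed (use False in auto)
qed

lemma almost_increasing_on_from_dilation: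
  assumes K: "K > 1" and c: "c > 1" and T: "T > 0"
    and gain: "\<forall>t\<ge>T. c * K powr \<beta> * \<sigma> t \<le> \<sigma> (K * t)"
  shows "almost_increasing_on {T..} (\<lambda>t. \<sigma> t / t powr (\<beta> + ln c / ln K))"
proof -
  define \<gamma> where "\<gamma> = \<beta> + ln c / ln K"
  have "\<gamma> > 0"
    unfolding \<gamma>_def using K c beta_nonneg by (auto intro: add_nonneg_pos divide_pos_pos)
  have "K powr (ln c / ln K) = c"
    using K c by (simp add: powr_def)
  then have K_powr: "K powr \<gamma> = c * K powr \<beta>"
    unfolding \<gamma>_def by (simp add: powr_add)
  show ?thesis
    unfolding \<gamma>_def[symmetric]
  proof (rule almost_increasing_on_from_dilation_step[OF K T])
    show "K powr \<gamma> > 0"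
      using K by simp
    fix x assume x: "T \<le> x"
    \<comment> \<open>the choice of \<open>\<gamma>\<close> makes \<open>\<sigma> t / t powr \<gamma>\<close> nondecreasing along \<open>t, K t, K\<^sup>2 t, \<dots>\<close>\<close>
    have "\<sigma> x / x powr \<gamma> = (c * K powr \<beta> * \<sigma> x) / (K * x) powr \<gamma>"
      using x T K c by (simp add: powr_mult K_powr)
    also have "\<dots> \<le> \<sigma> (K * x) / (K * x) powr \<gamma>"
      using gain x T K by (intro divide_right_mono) auto
    finally show "\<sigma> x / x powr \<gamma> \<le> \<sigma> (K * x) / (K * x) powr \<gamma>" .
    fix y assume xy: "x \<le> y" and yK: "y < K * x"
    have "\<sigma> x / x powr \<gamma> \<le> \<sigma> y / x powr \<gamma>"
      using sigma_mono[of x y] x T xy by (intro divide_right_mono) auto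
    also have "\<dots> = K powr \<gamma> * (\<sigma> y / (K * x) powr \<gamma>)"
      using x T K by (simp add: powr_mult)
    also have "\<dots> \<le> K powr \<gamma> * (\<sigma> y / y powr \<gamma>)"
      using sigma_nonneg[of y] x T K xy yK \<open>\<gamma> > 0\<close>
      by (intro mult_left_mono divide_left_mono powr_mono2) auto
    finally show "\<sigma> x / x powr \<gamma> \<le> K powr \<gamma> * (\<sigma> y / y powr \<gamma>)" .
  qed
qed

lemma dilation_gain_imp_almost_increasing_quotient:
  assumes dilation_gain
  shows almost_increasing_quotient
proof -
  obtain K c T where K: "K > 1" and c: "c > 1" and T: "T > 0"
    and gain: "\<forall>t\<ge>T. c * K powr \<beta> * \<sigma> t \<le> \<sigma> (K * t)"
    using assms unfolding dilation_gain_def by blast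
  have "\<beta> < \<beta> + ln c / ln K" "0 \<le> \<beta> + ln c / ln K"
    using K c beta_nonneg by auto
  with almost_increasing_on_from_dilation[OF K c T gain] show ?thesis
    unfolding almost_increasing_quotient_def by (blast intro: almost_increasing_quotient_extend)
qed

lemma almost_increasing_quotient_dilation_bound:
  assumes almost_increasing_quotient
  obtains \<gamma> M where "\<gamma> > \<beta>" "M > 0" "\<And>t k. 1 \<le> t \<Longrightarrow> 1 \<le> k \<Longrightarrow> k powr \<gamma> * \<sigma> t \<le> M * \<sigma> (k * t)"
proof -
  obtain \<gamma> where \<gamma>: "\<gamma> > \<beta>" "almost_increasing_on {1..} (\<lambda>t. \<sigma> t / t powr \<gamma>)"
    using assms unfolding almost_increasing_quotient_def by force
  then obtain M where M: "M > 0"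
    "\<And>x y. x \<in> {1..} \<Longrightarrow> y \<in> {1..} \<Longrightarrow> x \<le> y \<Longrightarrow> \<sigma> x / x powr \<gamma> \<le> M * (\<sigma> y / y powr \<gamma>)"
    unfolding almost_increasing_on_def by blast
  have "k powr \<gamma> * \<sigma> t \<le> M * \<sigma> (k * t)" if t: "1 \<le> t" and k: "1 \<le> k" for t k
  proof -
    have "t \<le> k * t" using t k by (simp add: mult_le_cancel_right1)
    with M(2)[of t "k * t"] t have "\<sigma> t / t powr \<gamma> \<le> M * (\<sigma> (k * t) / (k * t) powr \<gamma>)" by auto
    with t k show ?thesis by (simp add: powr_mult field_simps)
  qed
  with \<gamma>(1) M(1) that show ?thesis by blast
qed

text \<open>Capping \<open>\<gamma>\<close> at \<open>\<beta> + 1\<close> keeps \<open>\<gamma> - \<beta> \<le> 1\<close>, as \<open>sum_powr_le\<close> requires.\<close>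

lemma almost_increasing_quotientE:
  assumes almost_increasing_quotient and \<epsilon>: "\<epsilon> > 0"
  obtains \<gamma> where "\<beta> < \<gamma>" "\<gamma> \<le> \<beta> + 1" "almost_increasing_on {\<epsilon>..} (\<lambda>t. \<sigma> t / t powr \<gamma>)"
proof -
  obtain \<gamma> where \<gamma>: "\<gamma> > \<beta>" "almost_increasing_on {\<epsilon>..} (\<lambda>t. \<sigma> t / t powr \<gamma>)"
    using assms unfolding almost_increasing_quotient_def by force
  have "{\<epsilon>..} \<subseteq> {0<..}" "\<forall>t\<in>{\<epsilon>..}. 0 \<le> \<sigma> t"
    using \<epsilon> by (auto intro!: sigma_nonneg)
  from almost_increasing_on_smaller_exponent[OF \<gamma>(2) this, of "min \<gamma> (\<beta> + 1)"]
  have "almost_increasing_on {\<epsilon>..} (\<lambda>t. \<sigma> t / t powr min \<gamma> (\<beta> + 1))"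
    by simp
  moreover have "\<beta> < min \<gamma> (\<beta> + 1)" "min \<gamma> (\<beta> + 1) \<le> \<beta> + 1"
    using \<gamma>(1) by auto
  ultimately show ?thesis
    using that by blast
qed

lemma dilation_gain_from_integers:
  assumes L: "L \<ge> 1" and R: "R > 2 powr \<beta>" and P0: "P0 \<ge> 1"
    and gain: "\<forall>p::nat. real p \<ge> P0 \<longrightarrow> R * L powr \<beta> * \<sigma> (real p) \<le> \<sigma> (L * real p)"
  shows dilation_gain
proof -
  \<comment> \<open>rounding \<open>t\<close> up to an integer at most doubles it, which costs the factor \<open>2 powr \<beta>\<close>\<close>
  have "R / 2 powr \<beta> * (2 * L) powr \<beta> * \<sigma> t \<le> \<sigma> (2 * L * t)" if t: "P0 \<le> t" for t
  proof -
    define p where "p = nat \<lceil>t\<rceil>"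
    have p: "t \<le> real p" "real p \<le> 2 * t" using t P0 unfolding p_def by linarith+
    have "R / 2 powr \<beta> * (2 * L) powr \<beta> * \<sigma> t = R * L powr \<beta> * \<sigma> t"
      by (simp add: powr_mult)
    also have "\<dots> \<le> R * L powr \<beta> * \<sigma> (real p)"
      using sigma_mono[of t "real p"] p t P0 le_less_trans[OF powr_ge_zero R]
      by (intro mult_left_mono mult_nonneg_nonneg) auto
    also have "\<dots> \<le> \<sigma> (L * real p)"
      using gain p t by auto
    also have "\<dots> \<le> \<sigma> (2 * L * t)"
      using sigma_mono[of "L * real p" "2 * L * t"] p L t P0 by auto
    finally show ?thesis .
  qed
  moreover have "2 * L > 1" "P0 > 0" "R / 2 powr \<beta> > 1"
    using L P0 R by auto
  ultimately show ?thesis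
    unfolding dilation_gain_def by blast
qed

lemma integer_dilation_iterate:
  assumes k: "k \<ge> 1" and c: "c \<ge> 0"
    and gain: "\<forall>p::nat. real p \<ge> P0 \<longrightarrow> c * real k powr \<beta> * \<sigma> (real p) \<le> \<sigma> (real k * real p)"
    and p: "real p \<ge> P0"
  shows "c ^ m * real (k ^ m) powr \<beta> * \<sigma> (real p) \<le> \<sigma> (real (k ^ m) * real p)"
proof (induction m)
  case 0
  then show ?case by simp
next
  case (Suc m)
  have "p \<le> k ^ m * p" using k by simp
  with p have "real (k ^ m * p) \<ge> P0" by (meson of_nat_le_iff order_trans)
  have "c ^ Suc m * real (k ^ Suc m) powr \<beta> * \<sigma> (real p)
      = (c * real k powr \<beta>) * (c ^ m * real (k ^ m) powr \<beta> * \<sigma> (real p))"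
    by (simp add: powr_mult mult_ac)
  also have "\<dots> \<le> (c * real k powr \<beta>) * \<sigma> (real (k ^ m) * real p)"
    using Suc.IH c by (intro mult_left_mono) auto
  also have "\<dots> \<le> \<sigma> (real k * real (k ^ m * p))"
    using gain[rule_format, OF \<open>real (k ^ m * p) \<ge> P0\<close>] by simp
  finally show ?case by (simp add: mult_ac)
qed

lemma dilation_gain_from_integer_factor:
  assumes k: "k \<ge> 1" and c: "c > 1" and P0: "P0 \<ge> 1"
    and gain: "\<forall>p::nat. real p \<ge> P0 \<longrightarrow> c * real k powr \<beta> * \<sigma> (real p) \<le> \<sigma> (real k * real p)"
  shows dilation_gain
proof -
  obtain m where m: "2 powr \<beta> < c ^ m" using real_arch_pow[OF c] by blast
  have "1 \<le> real (k ^ m)" using k by simp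
  with m P0 integer_dilation_iterate[OF k _ gain] c show ?thesis
    by (intro dilation_gain_from_integers[of "real (k ^ m)" "c ^ m" P0]) auto
qed

section \<open>Ratio and index conditions\<close>

lemma eventually_sigma_pos: "eventually (\<lambda>t. 0 < \<sigma> t) at_top"
  using eventually_ge_at_top[of a] by eventually_elim (rule sigma_pos)

lemma dilation_gainI_eventually:
  assumes K: "K > 1" and c: "c > 1"
    and gain: "eventually (\<lambda>t. c * K powr \<beta> * \<sigma> t \<le> \<sigma> (K * t)) at_top"
  shows dilation_gain
proof -
  obtain N where N: "\<And>t. t \<ge> N \<Longrightarrow> c * K powr \<beta> * \<sigma> t \<le> \<sigma> (K * t)"
    using gain unfolding eventually_at_top_linorder by auto
  have "\<forall>t\<ge>max N 1. c * K powr \<beta> * \<sigma> t \<le> \<sigma> (K * t)" "max N 1 > 0"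
    using N by auto
  with K c show ?thesis
    unfolding dilation_gain_def by blast
qed

lemma liminf_ratio_imp_dilation_gain:
  assumes K: "K > 1" and L: "Liminf at_top (\<lambda>t. ereal (\<sigma> (K * t) / \<sigma> t)) > ereal (K powr \<beta>)"
  shows dilation_gain
proof -
  obtain c where c: "K powr \<beta> < c" "ereal c < Liminf at_top (\<lambda>t. ereal (\<sigma> (K * t) / \<sigma> t))"
    using ereal_dense2[OF L] by auto
  have "eventually (\<lambda>t. c < \<sigma> (K * t) / \<sigma> t) at_top"
    using less_LiminfD[OF c(2)] by simp
  then have "eventually (\<lambda>t. c / K powr \<beta> * K powr \<beta> * \<sigma> t \<le> \<sigma> (K * t)) at_top"
    using eventually_sigma_pos by eventually_elim (use K in \<open>simp add: field_simps\<close>)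
  moreover have "c / K powr \<beta> > 1"
    using c K by simp
  ultimately show ?thesis
    using dilation_gainI_eventually[OF K] by blast
qed

lemma liminf_ratio_tendsto_imp_dilation_gain:
  assumes "((\<lambda>k. Liminf at_top (\<lambda>t. ereal (\<sigma> (k * t) / (k powr \<beta> * \<sigma> t)))) \<longlongrightarrow> \<infinity>) at_top"
  shows dilation_gain
proof -
  have "eventually (\<lambda>k. ereal 2 < Liminf at_top (\<lambda>t. ereal (\<sigma> (k * t) / (k powr \<beta> * \<sigma> t)))) at_top"
    using assms unfolding tendsto_PInfty by blast
  then obtain N where N: "\<And>k. k \<ge> N \<Longrightarrow> ereal 2 < Liminf at_top (\<lambda>t. ereal (\<sigma> (k * t) / (k powr \<beta> * \<sigma> t)))"
    unfolding eventually_at_top_linorder by blast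
  define K where "K = max N 2"
  have K: "K > 1" and L: "ereal 2 < Liminf at_top (\<lambda>t. ereal (\<sigma> (K * t) / (K powr \<beta> * \<sigma> t)))"
    using N[of K] unfolding K_def by auto
  have "eventually (\<lambda>t. 2 < \<sigma> (K * t) / (K powr \<beta> * \<sigma> t)) at_top"
    using less_LiminfD[OF L] by simp
  then have "eventually (\<lambda>t. 2 * K powr \<beta> * \<sigma> t \<le> \<sigma> (K * t)) at_top"
    using eventually_sigma_pos by eventually_elim (use K in \<open>simp add: field_simps\<close>)
  with K show ?thesis
    by (intro dilation_gainI_eventually[of K 2]) auto
qed

lemma lower_matuszewska_imp_dilation_gain:
  assumes "lower_matuszewska \<sigma> > ereal \<beta>"
  shows dilation_gain
proof -
  obtain b D where b: "\<beta> < b" and D: "D > 0"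
    and liminf: "\<And>\<Lambda>. \<Lambda> > 1 \<Longrightarrow>
      Liminf at_top (\<lambda>x. INF l\<in>{1..\<Lambda>}. ereal (\<sigma> (l * x) / (l powr b * \<sigma> x))) \<ge> ereal D"
    using assms unfolding lower_matuszewska_def less_Sup_iff by auto
  obtain X where X: "X \<ge> 1" "\<And>x. x \<ge> X \<Longrightarrow> 4 / D \<le> x powr (b - \<beta>)"
    using powr_eventually_ge[of "b - \<beta>" "4 / D"] b by auto
  define K where "K = X + 1"
  have K: "K > 1" "4 / D \<le> K powr (b - \<beta>)"
    using X unfolding K_def by auto
  have "ereal (D / 2) < Liminf at_top (\<lambda>x. INF l\<in>{1..K}. ereal (\<sigma> (l * x) / (l powr b * \<sigma> x)))"
    using D by (intro less_le_trans[OF _ liminf[OF K(1)]]) simp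
  then have "eventually (\<lambda>x. ereal (D / 2) < (INF l\<in>{1..K}. ereal (\<sigma> (l * x) / (l powr b * \<sigma> x)))) at_top"
    by (rule less_LiminfD)
  then have "eventually (\<lambda>x. D / 2 < \<sigma> (K * x) / (K powr b * \<sigma> x)) at_top"
    by eventually_elim (use K in \<open>auto dest: order.strict_trans2[OF _ INF_lower[of K]]\<close>)
  then have "eventually (\<lambda>t. (D / 2 * K powr (b - \<beta>)) * K powr \<beta> * \<sigma> t \<le> \<sigma> (K * t)) at_top"
    using eventually_sigma_pos
    by eventually_elim (use K in \<open>simp add: field_simps mult.assoc flip: powr_add\<close>)
  moreover have "D / 2 * K powr (b - \<beta>) > 1"
  proof -
    have "D / 2 * (4 / D) \<le> D / 2 * K powr (b - \<beta>)"
      using K D by (intro mult_left_mono) auto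
    with D show ?thesis by simp
  qed
  ultimately show ?thesis
    using dilation_gainI_eventually[OF K(1)] by blast
qed

lemma integer_dilation_imp_dilation_gain:
  assumes "\<forall>\<theta>. 0 < \<theta> \<and> \<theta> < 1 \<longrightarrow> (\<exists>k::nat. 2 \<le> k \<and>
              (\<forall>p::nat. 1 \<le> p \<longrightarrow> \<sigma> (real p) \<le> \<theta> * real k powr (- \<beta>) * \<sigma> (real k * real p)))"
  shows dilation_gain
proof -
  obtain k :: nat where k: "2 \<le> k"
    and bound: "\<And>p::nat. 1 \<le> p \<Longrightarrow> \<sigma> (real p) \<le> 1/2 * real k powr (- \<beta>) * \<sigma> (real k * real p)"
    using assms[rule_format, of "1/2"] by auto
  have "2 * real k powr \<beta> * \<sigma> (real p) \<le> \<sigma> (real k * real p)" if "real p \<ge> 1" for p :: nat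
    using bound[of p] that k by (simp add: powr_minus field_simps)
  with k show ?thesis
    by (intro dilation_gain_from_integer_factor[of k 2 1]) auto
qed

lemma integer_liminf_ratio_imp_dilation_gain:
  assumes k: "2 \<le> k"
    and L: "Liminf sequentially (\<lambda>p::nat. ereal (\<sigma> (real k * real p) / \<sigma> (real p))) > ereal (real k powr \<beta>)"
  shows dilation_gain
proof -
  obtain c where c: "real k powr \<beta> < c"
    "ereal c < Liminf sequentially (\<lambda>p::nat. ereal (\<sigma> (real k * real p) / \<sigma> (real p)))"
    using ereal_dense2[OF L] by auto
  from less_LiminfD[OF c(2)] obtain N where N: "\<And>p. p \<ge> N \<Longrightarrow> c < \<sigma> (real k * real p) / \<sigma> (real p)"
    unfolding eventually_sequentially by auto
  define P0 where "P0 = max (real N) (max a 1)"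
  have "c / real k powr \<beta> * real k powr \<beta> * \<sigma> (real p) \<le> \<sigma> (real k * real p)"
    if p: "real p \<ge> P0" for p :: nat
  proof -
    have "0 < \<sigma> (real p)" "c < \<sigma> (real k * real p) / \<sigma> (real p)"
      using sigma_pos[of "real p"] N[of p] p unfolding P0_def by auto
    with k show ?thesis by (simp add: field_simps)
  qed
  moreover have "c / real k powr \<beta> > 1"
    using c k by simp
  ultimately show ?thesis
    using k by (intro dilation_gain_from_integer_factor[of k "c / real k powr \<beta>" P0]) (auto simp: P0_def)
qed

lemma almost_increasing_quotient_imp_liminf_ratio:
  assumes almost_increasing_quotient
  shows "\<exists>K>1. Liminf at_top (\<lambda>t. ereal (\<sigma> (K * t) / \<sigma> t)) > ereal (K powr \<beta>)"
proof -
  obtain \<gamma> M where \<gamma>: "\<gamma> > \<beta>" and M: "M > 0"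
    and bound: "\<And>t k. 1 \<le> t \<Longrightarrow> 1 \<le> k \<Longrightarrow> k powr \<gamma> * \<sigma> t \<le> M * \<sigma> (k * t)"
    using almost_increasing_quotient_dilation_bound[OF assms] by blast
  obtain X where X: "X \<ge> 1" "\<And>x. x \<ge> X \<Longrightarrow> 2 * M \<le> x powr (\<gamma> - \<beta>)"
    using powr_eventually_ge[of "\<gamma> - \<beta>" "2 * M"] \<gamma> by auto
  define K where "K = X + 1"
  have K: "K > 1" "2 * M \<le> K powr (\<gamma> - \<beta>)"
    using X unfolding K_def by auto
  have "eventually (\<lambda>t. ereal (2 * K powr \<beta>) \<le> ereal (\<sigma> (K * t) / \<sigma> t)) at_top"
    using eventually_ge_at_top[of 1] eventually_sigma_pos
  proof eventually_elim
    case (elim t)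
    have "M * (2 * K powr \<beta> * \<sigma> t) \<le> K powr (\<gamma> - \<beta>) * K powr \<beta> * \<sigma> t"
      using K elim by (simp add: mult.assoc mult_right_mono)
    also have "\<dots> \<le> M * \<sigma> (K * t)"
      using bound[of t K] elim K by (simp flip: powr_add)
    finally show ?case
      using M elim by (simp add: field_simps)
  qed
  then have "ereal (2 * K powr \<beta>) \<le> Liminf at_top (\<lambda>t. ereal (\<sigma> (K * t) / \<sigma> t))"
    by (rule Liminf_bounded)
  moreover have "ereal (K powr \<beta>) < ereal (2 * K powr \<beta>)"
    using K by simp
  ultimately show ?thesis
    using K by (blast intro: less_le_trans)
qed

lemma almost_increasing_quotient_imp_liminf_ratio_tendsto:
  assumes almost_increasing_quotient
  shows "((\<lambda>k. Liminf at_top (\<lambda>t. ereal (\<sigma> (k * t) / (k powr \<beta> * \<sigma> t)))) \<longlongrightarrow> \<infinity>) at_top"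
proof -
  obtain \<gamma> M where \<gamma>: "\<gamma> > \<beta>" and M: "M > 0"
    and bound: "\<And>t k. 1 \<le> t \<Longrightarrow> 1 \<le> k \<Longrightarrow> k powr \<gamma> * \<sigma> t \<le> M * \<sigma> (k * t)"
    using almost_increasing_quotient_dilation_bound[OF assms] by blast
  have lower: "ereal (k powr (\<gamma> - \<beta>) / M) \<le> Liminf at_top (\<lambda>t. ereal (\<sigma> (k * t) / (k powr \<beta> * \<sigma> t)))"
    if k: "k \<ge> 1" for k
  proof (rule Liminf_bounded)
    show "eventually (\<lambda>t. ereal (k powr (\<gamma> - \<beta>) / M) \<le> ereal (\<sigma> (k * t) / (k powr \<beta> * \<sigma> t))) at_top"
      using eventually_ge_at_top[of 1] eventually_sigma_pos
    proof eventually_elim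
      case (elim t)
      have "k powr (\<gamma> - \<beta>) * (k powr \<beta> * \<sigma> t) \<le> M * \<sigma> (k * t)"
        using bound[of t k] elim k by (simp add: mult.assoc[symmetric] flip: powr_add)
      with elim k M show ?case
        by (simp add: field_simps)
    qed
  qed
  show ?thesis unfolding tendsto_PInfty
  proof
    fix r :: real
    obtain X where X: "X \<ge> 1" "\<And>x. x \<ge> X \<Longrightarrow> (\<bar>r\<bar> + 1) * M \<le> x powr (\<gamma> - \<beta>)"
      using powr_eventually_ge[of "\<gamma> - \<beta>" "(\<bar>r\<bar> + 1) * M"] \<gamma> by auto
    show "eventually (\<lambda>k. ereal r < Liminf at_top (\<lambda>t. ereal (\<sigma> (k * t) / (k powr \<beta> * \<sigma> t)))) at_top"
      using eventually_ge_at_top[of X]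
    proof eventually_elim
      case (elim k)
      have "\<bar>r\<bar> + 1 \<le> k powr (\<gamma> - \<beta>) / M"
        using X(2)[OF elim] M by (simp add: field_simps)
      then have "ereal r < ereal (k powr (\<gamma> - \<beta>) / M)"
        by simp
      also have "\<dots> \<le> Liminf at_top (\<lambda>t. ereal (\<sigma> (k * t) / (k powr \<beta> * \<sigma> t)))"
        using lower[of k] elim X by simp
      finally show ?case .
    qed
  qed
qed

lemma almost_increasing_quotient_imp_lower_matuszewska:
  assumes almost_increasing_quotient
  shows "lower_matuszewska \<sigma> > ereal \<beta>"
proof -
  obtain \<gamma> M where \<gamma>: "\<gamma> > \<beta>" and M: "M > 0"
    and bound: "\<And>t k. 1 \<le> t \<Longrightarrow> 1 \<le> k \<Longrightarrow> k powr \<gamma> * \<sigma> t \<le> M * \<sigma> (k * t)"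
    using almost_increasing_quotient_dilation_bound[OF assms] by blast
  have "Liminf at_top (\<lambda>x. INF l\<in>{1..\<Lambda>}. ereal (\<sigma> (l * x) / (l powr \<gamma> * \<sigma> x))) \<ge> ereal (1 / M)"
    for \<Lambda> :: real
  proof (rule Liminf_bounded)
    show "eventually (\<lambda>x. ereal (1 / M) \<le> (INF l\<in>{1..\<Lambda>}. ereal (\<sigma> (l * x) / (l powr \<gamma> * \<sigma> x)))) at_top"
      using eventually_ge_at_top[of 1] eventually_sigma_pos
    proof eventually_elim
      case (elim x)
      have "ereal (1 / M) \<le> ereal (\<sigma> (l * x) / (l powr \<gamma> * \<sigma> x))" if l: "l \<in> {1..\<Lambda>}" for l
        using bound[of x l] elim l M by (simp add: field_simps)
      then show ?case
        by (rule INF_greatest)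
    qed
  qed
  moreover have "1 / M > 0"
    using M by simp
  ultimately have "ereal \<gamma> \<le> lower_matuszewska \<sigma>"
    unfolding lower_matuszewska_def by (intro Sup_upper) blast
  moreover have "ereal \<beta> < ereal \<gamma>"
    using \<gamma> by simp
  ultimately show ?thesis
    by (rule less_le_trans[rotated])
qed

lemma almost_increasing_quotient_imp_integer_dilation:
  assumes almost_increasing_quotient
  shows "\<forall>\<theta>. 0 < \<theta> \<and> \<theta> < 1 \<longrightarrow> (\<exists>k::nat. 2 \<le> k \<and>
              (\<forall>p::nat. 1 \<le> p \<longrightarrow> \<sigma> (real p) \<le> \<theta> * real k powr (- \<beta>) * \<sigma> (real k * real p)))"
proof (intro allI impI)
  fix \<theta> :: real assume \<theta>: "0 < \<theta> \<and> \<theta> < 1"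
  obtain \<gamma> M where \<gamma>: "\<gamma> > \<beta>" and M: "M > 0"
    and bound: "\<And>t k. 1 \<le> t \<Longrightarrow> 1 \<le> k \<Longrightarrow> k powr \<gamma> * \<sigma> t \<le> M * \<sigma> (k * t)"
    using almost_increasing_quotient_dilation_bound[OF assms] by blast
  obtain X where X: "X \<ge> 1" "\<And>x. x \<ge> X \<Longrightarrow> M / \<theta> \<le> x powr (\<gamma> - \<beta>)"
    using powr_eventually_ge[of "\<gamma> - \<beta>" "M / \<theta>"] \<gamma> by auto
  define k where "k = nat \<lceil>X\<rceil> + 2"
  have k: "real k \<ge> X" "k \<ge> 2"
    unfolding k_def by linarith+
  have "\<sigma> (real p) \<le> \<theta> * real k powr (- \<beta>) * \<sigma> (real k * real p)" if p: "1 \<le> p" for p :: nat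
  proof -
    have "M / \<theta> * (real k powr \<beta> * \<sigma> (real p)) \<le> real k powr (\<gamma> - \<beta>) * (real k powr \<beta> * \<sigma> (real p))"
      using X(2) k sigma_nonneg[of "real p"] by (intro mult_right_mono) auto
    also have "\<dots> \<le> M * \<sigma> (real k * real p)"
      using bound[of p k] p k by (simp add: mult.assoc[symmetric] flip: powr_add)
    finally have "real k powr \<beta> * \<sigma> (real p) \<le> \<theta> * \<sigma> (real k * real p)"
      using M \<theta> by (simp add: field_simps)
    with k show ?thesis
      by (simp add: powr_minus field_simps)
  qed
  with k show "\<exists>k::nat. 2 \<le> k \<and> (\<forall>p::nat. 1 \<le> p \<longrightarrow> \<sigma> (real p) \<le> \<theta> * real k powr (- \<beta>) * \<sigma> (real k * real p))"
    by blast
qed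

lemma integer_dilation_imp_integer_liminf_ratio:
  assumes "\<forall>\<theta>. 0 < \<theta> \<and> \<theta> < 1 \<longrightarrow> (\<exists>k::nat. 2 \<le> k \<and>
              (\<forall>p::nat. 1 \<le> p \<longrightarrow> \<sigma> (real p) \<le> \<theta> * real k powr (- \<beta>) * \<sigma> (real k * real p)))"
  shows "\<exists>k::nat. 2 \<le> k \<and>
           Liminf sequentially (\<lambda>p::nat. ereal (\<sigma> (real k * real p) / \<sigma> (real p))) > ereal (real k powr \<beta>)"
proof -
  obtain k :: nat where k: "2 \<le> k"
    and bound: "\<And>p::nat. 1 \<le> p \<Longrightarrow> \<sigma> (real p) \<le> 1/2 * real k powr (- \<beta>) * \<sigma> (real k * real p)"
    using assms[rule_format, of "1/2"] by auto
  have "eventually (\<lambda>p. ereal (2 * real k powr \<beta>) \<le> ereal (\<sigma> (real k * real p) / \<sigma> (real p))) sequentially"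
    using eventually_ge_at_top[of "nat \<lceil>a\<rceil> + 1"]
  proof eventually_elim
    case (elim p)
    then have "0 < \<sigma> (real p)" "1 \<le> p"
      using sigma_pos[of "real p"] by linarith+
    with bound[of p] k show ?case
      by (simp add: powr_minus field_simps)
  qed
  then have "ereal (2 * real k powr \<beta>) \<le> Liminf sequentially (\<lambda>p::nat. ereal (\<sigma> (real k * real p) / \<sigma> (real p)))"
    by (rule Liminf_bounded)
  moreover have "ereal (real k powr \<beta>) < ereal (2 * real k powr \<beta>)"
    using k by simp
  ultimately show ?thesis
    using k by (blast intro: less_le_trans)
qed

section \<open>Partial integrals and sums\<close>

lemma dilation_of_quotient_growth:
  assumes K: "K > 0" and z: "z > 0"
    and growth: "\<rho> * (\<sigma> z / z powr \<beta>) \<le> \<sigma> (K * z) / (K * z) powr \<beta>"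
  shows "\<rho> * K powr \<beta> * \<sigma> z \<le> \<sigma> (K * z)"
  using growth K z by (simp add: powr_mult field_simps)

text \<open>\<open>\<sigma>\<close> is monotone only on \<open>[0, \<infinity>)\<close>; \<open>\<sigma> \<circ> max 0\<close> is monotone everywhere, hence Borel, and agrees
  with \<open>\<sigma>\<close> on the domains of integration.\<close>

lemma borel_measurable_sigma_ext: "(\<lambda>t. \<sigma> (max 0 t)) \<in> borel_measurable borel"
  by (rule borel_measurable_mono) (auto simp: mono_def intro: sigma_mono)

lemma measurable_sigma_div_powr: "(\<lambda>t. \<sigma> (max 0 t) / t powr r) \<in> borel_measurable (lebesgue_on S)"
proof -
  have "(\<lambda>t. \<sigma> (max 0 t) / t powr r) \<in> borel_measurable borel"
    using borel_measurable_sigma_ext by measurable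
  then show ?thesis
    by (simp add: measurable_completion measurable_restrict_space1)
qed

lemma measurable_powr_div_sigma: "(\<lambda>t. t powr r / \<sigma> (max 0 t)) \<in> borel_measurable (lebesgue_on S)"
proof -
  have "(\<lambda>t. t powr r / \<sigma> (max 0 t)) \<in> borel_measurable borel"
    using borel_measurable_sigma_ext by measurable
  then show ?thesis
    by (simp add: measurable_completion measurable_restrict_space1)
qed

lemma integrable_sigma_div_powr:
  assumes u: "0 < u"
  shows "(\<lambda>t. \<sigma> t / t powr r) integrable_on {u..v}"
proof -
  have "(\<lambda>t. \<sigma> (max 0 t) / t powr r) integrable_on {u..v}"
  proof (rule measurable_bounded_by_integrable_imp_integrable_real[OF measurable_sigma_div_powr])
    show "(\<lambda>_. \<sigma> v / u powr r + \<sigma> v / v powr r) integrable_on {u..v}"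
      by (rule Henstock_Kurzweil_Integration.integrable_const_ivl)
    fix t assume t: "t \<in> {u..v}"
    have "min (u powr r) (v powr r) \<le> t powr r"
    proof (cases "r \<ge> 0")
      case True
      then have "u powr r \<le> t powr r" using t u by (intro powr_mono2) auto
      then show ?thesis by linarith
    next
      case False
      then have "v powr r \<le> t powr r" using t u by (intro powr_mono2') auto
      then show ?thesis by linarith
    qed
    then have "\<sigma> t / t powr r \<le> \<sigma> v / min (u powr r) (v powr r)"
      using sigma_nonneg[of t] sigma_mono[of t v] t u by (intro frac_le) (auto simp: min_def)
    also have "\<dots> \<le> \<sigma> v / u powr r + \<sigma> v / v powr r"
      using sigma_nonneg[of v] t u by (auto simp: min_def)
    finally show "\<bar>\<sigma> (max 0 t) / t powr r\<bar> \<le> \<sigma> v / u powr r + \<sigma> v / v powr r"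
      using sigma_nonneg[of t] t u by auto
  qed auto
  then show ?thesis
    by (rule integrable_eq) (use u in auto)
qed

lemma integral_doubling_increment:
  assumes N: "N \<ge> 1"
  shows "integral {1..N} (\<lambda>t. \<sigma> t / t powr (\<beta> + 1)) + \<sigma> N / N powr \<beta> / 2 powr (\<beta> + 1)
           \<le> integral {1..2 * N} (\<lambda>t. \<sigma> t / t powr (\<beta> + 1))"
proof -
  let ?h = "\<lambda>t. \<sigma> t / t powr (\<beta> + 1)"
  have "integral {1..N} ?h + integral {N..2 * N} ?h = integral {1..2 * N} ?h"
    using N by (intro Henstock_Kurzweil_Integration.integral_combine integrable_sigma_div_powr) auto
  moreover have "integral {N..2 * N} (\<lambda>_. \<sigma> N / (2 * N) powr (\<beta> + 1)) \<le> integral {N..2 * N} ?h"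
  proof (rule integral_le)
    show "?h integrable_on {N..2 * N}"
      using N by (intro integrable_sigma_div_powr) auto
    fix t assume t: "t \<in> {N..2 * N}"
    show "\<sigma> N / (2 * N) powr (\<beta> + 1) \<le> ?h t"
      using t N sigma_nonneg[of N] sigma_mono[of N t] beta_nonneg by (intro frac_le powr_mono2) auto
  qed auto
  moreover have "integral {N..2 * N} (\<lambda>_. \<sigma> N / (2 * N) powr (\<beta> + 1)) = \<sigma> N / N powr \<beta> / 2 powr (\<beta> + 1)"
    using N by (simp add: powr_mult powr_add field_simps)
  ultimately show ?thesis
    by linarith
qed

lemma sum_doubling_increment:
  assumes N: "N \<ge> 1"
  shows "(\<Sum>k=1..N. \<sigma> (real k) / real k powr (1 + \<beta>)) + \<sigma> (real N) / real N powr \<beta> / 2 powr (\<beta> + 1)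
           \<le> (\<Sum>k=1..2 * N. \<sigma> (real k) / real k powr (1 + \<beta>))"
proof -
  let ?f = "\<lambda>k::nat. \<sigma> (real k) / real k powr (1 + \<beta>)"
  have "sum ?f {1..2 * N} = sum ?f {1..N} + sum ?f {N + 1..N + N}"
    unfolding mult_2 using N by (intro sum.ub_add_nat) auto
  moreover have "real (card {N + 1..N + N}) * (\<sigma> (real N) / (2 * real N) powr (1 + \<beta>)) \<le> sum ?f {N + 1..N + N}"
  proof (rule sum_bounded_below)
    fix k assume k: "k \<in> {N + 1..N + N}"
    show "\<sigma> (real N) / (2 * real N) powr (1 + \<beta>) \<le> ?f k"
      using k N sigma_nonneg[of "real N"] sigma_mono[of "real N" "real k"] beta_nonneg
      by (intro frac_le powr_mono2) auto
  qed
  moreover have "real N * (\<sigma> (real N) / (2 * real N) powr (1 + \<beta>)) = \<sigma> (real N) / real N powr \<beta> / 2 powr (\<beta> + 1)"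
    using N by (simp add: powr_mult powr_add field_simps)
  ultimately show ?thesis
    by simp
qed

lemma partial_integral_bound_doubling_growth:
  assumes C: "C > 0" and z: "z \<ge> 1"
    and bound: "\<forall>y\<ge>1. integral {1..y} (\<lambda>t. \<sigma> t / t powr (\<beta> + 1)) \<le> C * \<sigma> y / y powr \<beta>"
  defines "g \<equiv> 1 / 2 powr (\<beta> + 1)"
  shows "(1 + g/C)^n * (g/C) * (\<sigma> z / z powr \<beta>) \<le> \<sigma> (2 ^ Suc n * z) / (2 ^ Suc n * z) powr \<beta>"
proof -
  define x where "x m = (2::real) ^ m * z" for m
  define A where "A m = integral {1..x m} (\<lambda>t. \<sigma> t / t powr (\<beta> + 1))" for m
  define U where "U m = \<sigma> (x m) / x m powr \<beta>" for m
  have x: "x m \<ge> 1" for m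
    using z mult_mono[of 1 "2 ^ m" 1 z] unfolding x_def by simp
  have "(1 + g/C)^n * (g/C) * U 0 \<le> U (Suc n)"
  proof (rule geometric_growth_from_increments[OF C])
    show "g > 0"
      unfolding g_def by simp
    show "A 0 \<ge> 0"
      unfolding A_def using x[of 0] sigma_nonneg
      by (intro integral_nonneg integrable_sigma_div_powr divide_nonneg_nonneg) auto
    fix m
    show "A m \<le> C * U m"
      using bound x[of m] unfolding A_def U_def by simp
    have "x (Suc m) = 2 * x m"
      unfolding x_def by simp
    then show "A m + g * U m \<le> A (Suc m)"
      using integral_doubling_increment[OF x[of m]] unfolding A_def U_def g_def
      by (simp add: mult.commute)
  qed
  then show ?thesis
    unfolding U_def x_def by simp
qed

lemma partial_integral_bound_imp_dilation_gain:
  assumes C: "C > 0"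
    and bound: "\<forall>y\<ge>1. integral {1..y} (\<lambda>t. \<sigma> t / t powr (\<beta> + 1)) \<le> C * \<sigma> y / y powr \<beta>"
  shows dilation_gain
proof -
  define g :: real where "g = 1 / 2 powr (\<beta> + 1)"
  have g: "g > 0"
    unfolding g_def by simp
  obtain n where n: "1 < (1 + g/C)^n * (g/C)"
    using geometric_exceeds[OF C g] .
  define \<rho> where "\<rho> = (1 + g/C)^n * (g/C)"
  define K :: real where "K = 2 ^ Suc n"
  have "K > 1"
    unfolding K_def by (rule one_less_power) auto
  have "\<rho> > 1"
    using n unfolding \<rho>_def .
  then show ?thesis
  proof (rule dilation_gainI[OF \<open>K > 1\<close> _ zero_less_one])
    fix z :: real assume z: "z \<ge> 1"
    show "\<rho> * K powr \<beta> * \<sigma> z \<le> \<sigma> (K * z)"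
    proof (rule dilation_of_quotient_growth)
      show "\<rho> * (\<sigma> z / z powr \<beta>) \<le> \<sigma> (K * z) / (K * z) powr \<beta>"
        using partial_integral_bound_doubling_growth[OF C z bound, of n] unfolding \<rho>_def K_def g_def .
    qed (use z \<open>K > 1\<close> in auto)
  qed
qed

lemma partial_integral_le_of_quotient_bound:
  assumes \<gamma>: "\<beta> < \<gamma>" and M: "M > 0"
    and q: "\<forall>x\<in>{1..}. \<forall>y\<in>{1..}. x \<le> y \<longrightarrow> \<sigma> x / x powr \<gamma> \<le> M * (\<sigma> y / y powr \<gamma>)"
    and y: "y \<ge> 1"
  defines "\<delta> \<equiv> \<gamma> - \<beta>"
  shows "integral {1..y} (\<lambda>t. \<sigma> t / t powr (\<beta> + 1)) \<le> M / \<delta> * \<sigma> y / y powr \<beta>"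
proof -
  have \<delta>: "\<delta> > 0"
    unfolding \<delta>_def using \<gamma> by simp
  define c where "c = M * (\<sigma> y / y powr \<gamma>)"
  have c: "c \<ge> 0"
    unfolding c_def using M sigma_nonneg[of y] y by auto
  have I: "((\<lambda>t. c * t powr (\<delta> - 1)) has_integral (c * (y powr \<delta> / \<delta> - 1 / \<delta>))) {1..y}"
    by (intro has_integral_mult_right has_integral_powr_from_1 \<delta> y)
  \<comment> \<open>almost monotonicity bounds the integrand by \<open>c t\<^sup>\<delta>\<^sup>-\<^sup>1\<close>, whose integral is explicit\<close>
  have "integral {1..y} (\<lambda>t. \<sigma> t / t powr (\<beta> + 1)) \<le> integral {1..y} (\<lambda>t. c * t powr (\<delta> - 1))"
  proof (rule integral_le)
    show "(\<lambda>t. \<sigma> t / t powr (\<beta> + 1)) integrable_on {1..y}"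
      by (rule integrable_sigma_div_powr) simp
    show "(\<lambda>t. c * t powr (\<delta> - 1)) integrable_on {1..y}"
      using I by blast
    fix t assume t: "t \<in> {1..y}"
    have "\<sigma> t / t powr (\<beta> + 1) = (\<sigma> t / t powr \<gamma>) * t powr (\<delta> - 1)"
      using t unfolding \<delta>_def by (simp add: powr_diff powr_add field_simps)
    also have "\<dots> \<le> c * t powr (\<delta> - 1)"
      unfolding c_def using q t by (intro mult_right_mono) auto
    finally show "\<sigma> t / t powr (\<beta> + 1) \<le> c * t powr (\<delta> - 1)" .
  qed
  also have "\<dots> = c * (y powr \<delta> / \<delta> - 1 / \<delta>)"
    using I by (rule integral_unique)
  also have "\<dots> \<le> c * (y powr \<delta> / \<delta>)"
    using c \<delta> by (intro mult_left_mono) auto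
  also have "\<dots> = M / \<delta> * \<sigma> y / y powr \<beta>"
  proof -
    have "y powr \<gamma> = y powr \<delta> * y powr \<beta>"
      unfolding \<delta>_def by (simp flip: powr_add)
    with y \<delta> show ?thesis
      unfolding c_def by (simp add: field_simps)
  qed
  finally show ?thesis .
qed

lemma almost_increasing_quotient_imp_partial_integral_bound:
  assumes almost_increasing_quotient
  shows "\<exists>C>0. \<forall>y\<ge>1. integral {1..y} (\<lambda>t. \<sigma> t / t powr (\<beta> + 1)) \<le> C * \<sigma> y / y powr \<beta>"
proof -
  obtain \<gamma> where \<gamma>: "\<beta> < \<gamma>" "almost_increasing_on {1..} (\<lambda>t. \<sigma> t / t powr \<gamma>)"
    by (rule almost_increasing_quotientE[OF assms zero_less_one])
  then obtain M where M: "M > 0"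
    "\<forall>x\<in>{1..}. \<forall>y\<in>{1..}. x \<le> y \<longrightarrow> \<sigma> x / x powr \<gamma> \<le> M * (\<sigma> y / y powr \<gamma>)"
    unfolding almost_increasing_on_def by blast
  have "M / (\<gamma> - \<beta>) > 0"
    using \<gamma> M by simp
  moreover note partial_integral_le_of_quotient_bound[OF \<gamma>(1) M]
  ultimately show ?thesis
    by (intro exI[of _ "M / (\<gamma> - \<beta>)"]) auto
qed


lemma partial_sum_bound_doubling_growth:
  fixes p :: nat
  assumes C: "C > 0" and p: "p \<ge> 1"
    and bound: "\<forall>p::nat. 1 \<le> p \<longrightarrow>
              (\<Sum>k=1..p. \<sigma> (real k) / real k powr (1 + \<beta>)) \<le> C * \<sigma> (real p) / real p powr \<beta>"
  defines "g \<equiv> 1 / 2 powr (\<beta> + 1)"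
  shows "(1 + g/C)^n * (g/C) * (\<sigma> (real p) / real p powr \<beta>)
           \<le> \<sigma> (2 ^ Suc n * real p) / (2 ^ Suc n * real p) powr \<beta>"
proof -
  define x where "x m = 2 ^ m * p" for m
  define A where "A m = (\<Sum>k=1..x m. \<sigma> (real k) / real k powr (1 + \<beta>))" for m
  define U where "U m = \<sigma> (real (x m)) / real (x m) powr \<beta>" for m
  have x: "x m \<ge> 1" for m
    using p unfolding x_def by simp
  have "(1 + g/C)^n * (g/C) * U 0 \<le> U (Suc n)"
  proof (rule geometric_growth_from_increments[OF C])
    show "g > 0"
      unfolding g_def by simp
    show "A 0 \<ge> 0"
      unfolding A_def by (intro sum_nonneg divide_nonneg_nonneg sigma_nonneg) auto
    fix m
    show "A m \<le> C * U m"
      using bound x[of m] unfolding A_def U_def by simp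
    have "x (Suc m) = 2 * x m"
      unfolding x_def by simp
    then show "A m + g * U m \<le> A (Suc m)"
      using sum_doubling_increment[OF x[of m]] unfolding A_def U_def g_def
      by (simp add: mult.commute)
  qed
  then show ?thesis
    unfolding U_def x_def by simp
qed

lemma partial_sum_bound_imp_dilation_gain:
  assumes C: "C > 0"
    and bound: "\<forall>p::nat. 1 \<le> p \<longrightarrow>
              (\<Sum>k=1..p. \<sigma> (real k) / real k powr (1 + \<beta>)) \<le> C * \<sigma> (real p) / real p powr \<beta>"
  shows dilation_gain
proof -
  define g :: real where "g = 1 / 2 powr (\<beta> + 1)"
  have g: "g > 0"
    unfolding g_def by simp
  obtain n where n: "2 powr \<beta> < (1 + g/C)^n * (g/C)"
    using geometric_exceeds[OF C g] .
  define \<rho> where "\<rho> = (1 + g/C)^n * (g/C)"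
  define L :: real where "L = 2 ^ Suc n"
  have "L \<ge> 1"
    unfolding L_def by (rule one_le_power) simp
  have "2 powr \<beta> < \<rho>"
    using n unfolding \<rho>_def .
  then show ?thesis
  proof (rule dilation_gain_from_integers[OF \<open>L \<ge> 1\<close> _ order_refl, rule_format])
    fix p :: nat assume p: "1 \<le> real p"
    show "\<rho> * L powr \<beta> * \<sigma> (real p) \<le> \<sigma> (L * real p)"
    proof (rule dilation_of_quotient_growth)
      show "\<rho> * (\<sigma> (real p) / real p powr \<beta>) \<le> \<sigma> (L * real p) / (L * real p) powr \<beta>"
        using partial_sum_bound_doubling_growth[OF C _ bound, of p n] p unfolding \<rho>_def L_def g_def by simp
    qed (use p \<open>L \<ge> 1\<close> in auto)
  qed
qed

lemma partial_sum_le_of_quotient_bound: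
  fixes p :: nat
  assumes \<gamma>: "\<beta> < \<gamma>" "\<gamma> \<le> \<beta> + 1" and M: "M > 0"
    and q: "\<forall>x\<in>{1..}. \<forall>y\<in>{1..}. x \<le> y \<longrightarrow> \<sigma> x / x powr \<gamma> \<le> M * (\<sigma> y / y powr \<gamma>)"
    and p: "1 \<le> p"
  defines "\<delta> \<equiv> \<gamma> - \<beta>"
  shows "(\<Sum>k=1..p. \<sigma> (real k) / real k powr (1 + \<beta>)) \<le> M / \<delta> * \<sigma> (real p) / real p powr \<beta>"
proof -
  have \<delta>: "0 < \<delta>" "\<delta> \<le> 1"
    unfolding \<delta>_def using \<gamma> by auto
  define c where "c = M * (\<sigma> (real p) / real p powr \<gamma>)"
  have c: "c \<ge> 0"
    unfolding c_def using M sigma_nonneg[of "real p"] by auto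
  have "(\<Sum>k=1..p. \<sigma> (real k) / real k powr (1 + \<beta>)) \<le> (\<Sum>k=1..p. c * real k powr (\<delta> - 1))"
  proof (rule sum_mono)
    fix k assume k: "k \<in> {1..p}"
    have "\<sigma> (real k) / real k powr (1 + \<beta>) = (\<sigma> (real k) / real k powr \<gamma>) * real k powr (\<delta> - 1)"
      using k unfolding \<delta>_def by (simp add: powr_diff powr_add field_simps)
    also have "\<dots> \<le> c * real k powr (\<delta> - 1)"
      unfolding c_def using q k by (intro mult_right_mono) auto
    finally show "\<sigma> (real k) / real k powr (1 + \<beta>) \<le> c * real k powr (\<delta> - 1)" .
  qed
  also have "\<dots> = c * (\<Sum>k=1..p. real k powr (\<delta> - 1))"
    by (simp add: sum_distrib_left)
  also have "\<dots> \<le> c * (real p powr \<delta> / \<delta>)"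
    using c sum_powr_le[OF \<delta>] by (intro mult_left_mono) auto
  also have "\<dots> = M / \<delta> * \<sigma> (real p) / real p powr \<beta>"
  proof -
    have "real p powr \<gamma> = real p powr \<delta> * real p powr \<beta>"
      unfolding \<delta>_def by (simp flip: powr_add)
    with p \<delta> show ?thesis
      unfolding c_def by (simp add: field_simps)
  qed
  finally show ?thesis .
qed

lemma almost_increasing_quotient_imp_partial_sum_bound:
  assumes almost_increasing_quotient
  shows "\<exists>C>0. \<forall>p::nat. 1 \<le> p \<longrightarrow>
           (\<Sum>k=1..p. \<sigma> (real k) / real k powr (1 + \<beta>)) \<le> C * \<sigma> (real p) / real p powr \<beta>"
proof -
  obtain \<gamma> where \<gamma>: "\<beta> < \<gamma>" "\<gamma> \<le> \<beta> + 1" "almost_increasing_on {1..} (\<lambda>t. \<sigma> t / t powr \<gamma>)"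
    by (rule almost_increasing_quotientE[OF assms zero_less_one])
  then obtain M where M: "M > 0"
    "\<forall>x\<in>{1..}. \<forall>y\<in>{1..}. x \<le> y \<longrightarrow> \<sigma> x / x powr \<gamma> \<le> M * (\<sigma> y / y powr \<gamma>)"
    unfolding almost_increasing_on_def by blast
  have "M / (\<gamma> - \<beta>) > 0"
    using \<gamma> M by simp
  moreover note partial_sum_le_of_quotient_bound[OF \<gamma>(1,2) M]
  ultimately show ?thesis
    by (intro exI[of _ "M / (\<gamma> - \<beta>)"]) auto
qed


section \<open>Tail integrals and sums\<close>

lemma integrable_powr_div_sigma:
  assumes u: "0 < u" and su: "\<sigma> u > 0"
  shows "(\<lambda>t. t powr r / \<sigma> t) integrable_on {u..v}"
proof -
  have "(\<lambda>t. t powr r / \<sigma> (max 0 t)) integrable_on {u..v}"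
  proof (rule measurable_bounded_by_integrable_imp_integrable_real[OF measurable_powr_div_sigma])
    show "(\<lambda>_. (u powr r + v powr r) / \<sigma> u) integrable_on {u..v}"
      by (rule Henstock_Kurzweil_Integration.integrable_const_ivl)
    fix t assume t: "t \<in> {u..v}"
    have \<sigma>t: "0 < \<sigma> t" "\<sigma> u \<le> \<sigma> t"
      using su sigma_mono[of u t] t u by auto
    have "t powr r \<le> u powr r + v powr r"
    proof (cases "r \<ge> 0")
      case True
      then have "t powr r \<le> v powr r" using t u by (intro powr_mono2) auto
      then show ?thesis using powr_ge_zero[of u r] by linarith
    next
      case False
      then have "t powr r \<le> u powr r" using t u by (intro powr_mono2') auto
      then show ?thesis using powr_ge_zero[of v r] by linarith
    qed
    then have "t powr r / \<sigma> t \<le> (u powr r + v powr r) / \<sigma> u"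
      using su \<sigma>t by (intro frac_le) auto
    with \<sigma>t t u show "\<bar>t powr r / \<sigma> (max 0 t)\<bar> \<le> (u powr r + v powr r) / \<sigma> u"
      by simp
  qed auto
  then show ?thesis
    by (rule integrable_eq) (use u in auto)
qed

lemma integrable_powr_div_sigma_tail:
  assumes y: "0 < y" "\<sigma> y > 0" and g: "g integrable_on {y..}"
    and le: "\<And>t. y \<le> t \<Longrightarrow> t powr r / \<sigma> t \<le> g t"
  shows "(\<lambda>t. t powr r / \<sigma> t) integrable_on {y..}"
proof -
  have "(\<lambda>t. t powr r / \<sigma> (max 0 t)) integrable_on {y..}"
  proof (rule measurable_bounded_by_integrable_imp_integrable_real[OF measurable_powr_div_sigma g])
    fix t assume t: "t \<in> {y..}"
    have "0 \<le> t powr r / \<sigma> t"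
      using t y sigma_nonneg[of t] by auto
    with le[of t] t y show "\<bar>t powr r / \<sigma> (max 0 t)\<bar> \<le> g t"
      by auto
  qed auto
  then show ?thesis
    by (rule integrable_eq) (use y in auto)
qed

lemma dilation_of_tail_decay:
  assumes K: "K > 0" and z: "z > 0" and pos: "\<sigma> z > 0" "\<sigma> (K * z) > 0"
    and decay: "\<rho> * ((K * z) powr \<beta> / \<sigma> (K * z)) \<le> z powr \<beta> / \<sigma> z"
  shows "\<rho> * K powr \<beta> * \<sigma> z \<le> \<sigma> (K * z)"
proof -
  have "\<rho> * (K * z) powr \<beta> * \<sigma> z \<le> z powr \<beta> * \<sigma> (K * z)"
    using decay pos by (simp add: field_simps)
  then have "z powr \<beta> * (\<rho> * K powr \<beta> * \<sigma> z) \<le> z powr \<beta> * \<sigma> (K * z)"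
    by (simp add: powr_mult mult_ac)
  with z show ?thesis
    by simp
qed

lemma tail_integral_doubling_decrement:
  assumes N: "N > 0" "\<sigma> N > 0"
    and tail: "(\<lambda>t. t powr (\<beta> - 1) / \<sigma> t) integrable_on {2 * N..}"
  shows "integral {2 * N..} (\<lambda>t. t powr (\<beta> - 1) / \<sigma> t) + (2 * N) powr \<beta> / \<sigma> (2 * N) / 2 powr (\<beta> + 1)
           \<le> integral {N..} (\<lambda>t. t powr (\<beta> - 1) / \<sigma> t)"
proof -
  let ?f = "\<lambda>t. t powr (\<beta> - 1) / \<sigma> t"
  have head: "?f integrable_on {N..2 * N}"
    using N by (intro integrable_powr_div_sigma) auto
  have "(?f has_integral (integral {N..2 * N} ?f + integral {2 * N..} ?f)) ({N..2 * N} \<union> {2 * N..})"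
    by (intro has_integral_Un integrable_integral head tail)
       (auto intro: negligible_subset[OF negligible_sing[of "2 * N"]])
  moreover have "{N..2 * N} \<union> {2 * N..} = {N..}"
    using N by auto
  ultimately have split: "integral {N..} ?f = integral {N..2 * N} ?f + integral {2 * N..} ?f"
    by (simp add: integral_unique)
  have "integral {N..2 * N} (\<lambda>_. N powr (\<beta> - 1) / 2 / \<sigma> (2 * N)) \<le> integral {N..2 * N} ?f"
  proof (rule integral_le[OF _ head])
    fix t assume t: "t \<in> {N..2 * N}"
    with N sigma_mono[of N t] have "0 < \<sigma> t"
      by auto
    with t N sigma_mono[of t "2 * N"] powr_ge_half_on_doubling_interval[of N t \<beta>] beta_nonneg
    show "N powr (\<beta> - 1) / 2 / \<sigma> (2 * N) \<le> ?f t"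
      by (intro frac_le) auto
  qed auto
  moreover have "integral {N..2 * N} (\<lambda>_. N powr (\<beta> - 1) / 2 / \<sigma> (2 * N))
      = (2 * N) powr \<beta> / \<sigma> (2 * N) / 2 powr (\<beta> + 1)"
  proof -
    have "N * N powr (\<beta> - 1) = N powr \<beta>"
      using N by (simp add: powr_diff)
    moreover have "(2 * N) powr \<beta> = 2 powr \<beta> * N powr \<beta>"
      by (simp add: powr_mult)
    moreover have "2 powr (\<beta> + 1) = 2 powr \<beta> * 2"
      by (simp add: powr_add)
    ultimately show ?thesis
      using N by (simp add: field_simps)
  qed
  ultimately show ?thesis
    using split by linarith
qed

lemma tail_sum_doubling_decrement:
  fixes N :: nat
  assumes N: "N \<ge> 1" "\<sigma> (real N) > 0"
    and tail: "summable (\<lambda>j. real (j + N) powr (\<beta> - 1) / \<sigma> (real (j + N)))"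
  shows "(\<Sum>j. real (j + 2 * N) powr (\<beta> - 1) / \<sigma> (real (j + 2 * N)))
           + real (2 * N) powr \<beta> / \<sigma> (real (2 * N)) / 2 powr (\<beta> + 1)
         \<le> (\<Sum>j. real (j + N) powr (\<beta> - 1) / \<sigma> (real (j + N)))"
proof -
  let ?f = "\<lambda>k::nat. real k powr (\<beta> - 1) / \<sigma> (real k)"
  have "\<And>j. j + 2 * N = j + N + N"
    by simp
  then have split: "(\<Sum>j. ?f (j + N)) = (\<Sum>j. ?f (j + 2 * N)) + (\<Sum>j<N. ?f (j + N))"
    using suminf_split_initial_segment[OF tail, of N] by (simp only:)
  have "real (card {..<N}) * (real N powr (\<beta> - 1) / 2 / \<sigma> (2 * real N)) \<le> (\<Sum>j<N. ?f (j + N))"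
  proof (rule sum_bounded_below)
    fix j assume j: "j \<in> {..<N}"
    have "0 < \<sigma> (real (j + N))"
      using N sigma_mono[of "real N" "real (j + N)"] by auto
    with j N sigma_mono[of "real (j + N)" "2 * real N"]
      powr_ge_half_on_doubling_interval[of "real N" "real (j + N)" \<beta>] beta_nonneg
    show "real N powr (\<beta> - 1) / 2 / \<sigma> (2 * real N) \<le> ?f (j + N)"
      by (intro frac_le) auto
  qed
  moreover have "real (card {..<N}) * (real N powr (\<beta> - 1) / 2 / \<sigma> (2 * real N))
      = real (2 * N) powr \<beta> / \<sigma> (real (2 * N)) / 2 powr (\<beta> + 1)"
  proof -
    have "real N * real N powr (\<beta> - 1) = real N powr \<beta>"
      using N by (simp add: powr_diff)
    moreover have "(2 * real N) powr \<beta> = 2 powr \<beta> * real N powr \<beta>"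
      by (simp add: powr_mult)
    moreover have "2 powr (\<beta> + 1) = 2 powr \<beta> * 2"
      by (simp add: powr_add)
    ultimately show ?thesis
      using N by (simp add: field_simps)
  qed
  ultimately show ?thesis
    using split by linarith
qed

lemma tail_integral_bound_doubling_decay:
  assumes \<epsilon>: "\<epsilon> > 0" and pos_\<epsilon>: "\<forall>x\<ge>\<epsilon>. \<sigma> x > 0" and C: "C > 0" and y: "y \<ge> \<epsilon>"
    and bound: "\<forall>y\<ge>\<epsilon>. (\<lambda>t. t powr (\<beta> - 1) / \<sigma> t) integrable_on {y..} \<and>
                  integral {y..} (\<lambda>t. t powr (\<beta> - 1) / \<sigma> t) / y powr \<beta> \<le> C / \<sigma> y"
  defines "g \<equiv> 1 / 2 powr (\<beta> + 1)"
  shows "(1 + g/C)^n * (g/C) * ((2 ^ Suc n * y) powr \<beta> / \<sigma> (2 ^ Suc n * y)) \<le> y powr \<beta> / \<sigma> y"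
proof -
  define x where "x m = (2::real) ^ m * y" for m
  define B where "B m = integral {x m..} (\<lambda>t. t powr (\<beta> - 1) / \<sigma> t)" for m
  define V where "V m = x m powr \<beta> / \<sigma> (x m)" for m
  have x_ge: "\<epsilon> \<le> x m" for m
    using y \<epsilon> mult_mono[of 1 "2 ^ m" \<epsilon> y] unfolding x_def by simp
  then have x: "0 < x m" "0 < \<sigma> (x m)" for m
    using \<epsilon> pos_\<epsilon> by (auto intro: less_le_trans)
  have "(1 + g/C)^n * (g/C) * V (Suc n) \<le> V 0"
  proof (rule geometric_decay_from_tails[OF C])
    show "g > 0"
      unfolding g_def by simp
    fix m
    have "B m / x m powr \<beta> \<le> C / \<sigma> (x m)"
      using bound x_ge[of m] unfolding B_def by auto
    with x[of m] show "B m \<le> C * V m"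
      unfolding V_def by (simp add: field_simps)
    show "B m \<ge> 0"
      unfolding B_def using bound x_ge[of m] x[of m] sigma_nonneg
      by (intro integral_nonneg divide_nonneg_nonneg) auto
    have "x (Suc m) = 2 * x m"
      unfolding x_def by simp
    then show "B (Suc m) + g * V (Suc m) \<le> B m"
      using tail_integral_doubling_decrement[of "x m"] x[of m] bound x_ge[of "Suc m"]
      unfolding B_def V_def g_def by (simp add: mult.commute)
  qed
  then show ?thesis
    unfolding V_def x_def by simp
qed

lemma tail_integral_bound_imp_dilation_gain:
  assumes \<epsilon>: "\<epsilon> > 0" and pos_\<epsilon>: "\<forall>x\<ge>\<epsilon>. \<sigma> x > 0" and C: "C > 0"
    and bound: "\<forall>y\<ge>\<epsilon>. (\<lambda>t. t powr (\<beta> - 1) / \<sigma> t) integrable_on {y..} \<and>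
                  integral {y..} (\<lambda>t. t powr (\<beta> - 1) / \<sigma> t) / y powr \<beta> \<le> C / \<sigma> y"
  shows dilation_gain
proof -
  define g :: real where "g = 1 / 2 powr (\<beta> + 1)"
  have g: "g > 0"
    unfolding g_def by simp
  obtain n where n: "1 < (1 + g/C)^n * (g/C)"
    using geometric_exceeds[OF C g] .
  define \<rho> where "\<rho> = (1 + g/C)^n * (g/C)"
  define K :: real where "K = 2 ^ Suc n"
  have "K > 1"
    unfolding K_def by (rule one_less_power) auto
  have "\<rho> > 1"
    using n unfolding \<rho>_def .
  then show ?thesis
  proof (rule dilation_gainI[OF \<open>K > 1\<close> _ \<epsilon>])
    fix z :: real assume z: "z \<ge> \<epsilon>"
    have "\<epsilon> \<le> K * z"
      using z \<epsilon> \<open>K > 1\<close> mult_mono[of 1 K \<epsilon> z] by simp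
    with z \<epsilon> pos_\<epsilon> show "\<rho> * K powr \<beta> * \<sigma> z \<le> \<sigma> (K * z)"
      using tail_integral_bound_doubling_decay[OF \<epsilon> pos_\<epsilon> C z bound, of n] \<open>K > 1\<close>
      unfolding \<rho>_def K_def g_def by (intro dilation_of_tail_decay) auto
  qed
qed

lemma tail_sum_bound_doubling_decay:
  fixes p :: nat
  assumes C: "C > 0" and p: "1 \<le> p" "a \<le> real p"
    and bound: "\<forall>p::nat. 1 \<le> p \<and> a \<le> real p \<longrightarrow>
              summable (\<lambda>j. real (j + p) powr (\<beta> - 1) / \<sigma> (real (j + p))) \<and>
              (\<Sum>j. real (j + p) powr (\<beta> - 1) / \<sigma> (real (j + p))) \<le> C * real p powr \<beta> / \<sigma> (real p)"
  defines "g \<equiv> 1 / 2 powr (\<beta> + 1)"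
  shows "(1 + g/C)^n * (g/C) * ((2 ^ Suc n * real p) powr \<beta> / \<sigma> (2 ^ Suc n * real p))
           \<le> real p powr \<beta> / \<sigma> (real p)"
proof -
  define x where "x m = 2 ^ m * p" for m
  define B where "B m = (\<Sum>j. real (j + x m) powr (\<beta> - 1) / \<sigma> (real (j + x m)))" for m
  define V where "V m = real (x m) powr \<beta> / \<sigma> (real (x m))" for m
  have x: "1 \<le> x m" "a \<le> real (x m)" for m
  proof -
    have "p \<le> x m"
      unfolding x_def by simp
    with p show "1 \<le> x m" "a \<le> real (x m)"
      by auto
  qed
  have "(1 + g/C)^n * (g/C) * V (Suc n) \<le> V 0"
  proof (rule geometric_decay_from_tails[OF C])
    show "g > 0"
      unfolding g_def by simp
    fix m
    show "B m \<le> C * V m"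
      using bound x[of m] unfolding B_def V_def by (simp add: mult_ac)
    show "B m \<ge> 0"
      unfolding B_def using bound x[of m] sigma_nonneg
      by (intro suminf_nonneg divide_nonneg_nonneg) auto
    have "x (Suc m) = 2 * x m"
      unfolding x_def by simp
    then show "B (Suc m) + g * V (Suc m) \<le> B m"
      using tail_sum_doubling_decrement[OF x(1)[of m]] sigma_pos[OF x(2)[of m]] bound x[of m]
      unfolding B_def V_def g_def by (simp add: mult.commute)
  qed
  then show ?thesis
    unfolding V_def x_def by simp
qed

lemma tail_sum_bound_imp_dilation_gain:
  assumes C: "C > 0"
    and bound: "\<forall>p::nat. 1 \<le> p \<and> a \<le> real p \<longrightarrow>
              summable (\<lambda>j. real (j + p) powr (\<beta> - 1) / \<sigma> (real (j + p))) \<and>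
              (\<Sum>j. real (j + p) powr (\<beta> - 1) / \<sigma> (real (j + p))) \<le> C * real p powr \<beta> / \<sigma> (real p)"
  shows dilation_gain
proof -
  define g :: real where "g = 1 / 2 powr (\<beta> + 1)"
  have g: "g > 0"
    unfolding g_def by simp
  obtain n where n: "2 powr \<beta> < (1 + g/C)^n * (g/C)"
    using geometric_exceeds[OF C g] .
  define \<rho> where "\<rho> = (1 + g/C)^n * (g/C)"
  define L :: real where "L = 2 ^ Suc n"
  have "L \<ge> 1"
    unfolding L_def by (rule one_le_power) simp
  have "2 powr \<beta> < \<rho>"
    using n unfolding \<rho>_def .
  then show ?thesis
  proof (rule dilation_gain_from_integers[OF \<open>L \<ge> 1\<close> _ max.cobounded1[of 1 a], rule_format])
    fix p :: nat assume "max 1 a \<le> real p"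
    then have p: "1 \<le> p" "a \<le> real p"
      by auto
    have "a \<le> L * real p"
      using p(2) \<open>L \<ge> 1\<close> mult_right_mono[of 1 L "real p"] by simp
    with p show "\<rho> * L powr \<beta> * \<sigma> (real p) \<le> \<sigma> (L * real p)"
      using tail_sum_bound_doubling_decay[OF C p bound, of n] \<open>L \<ge> 1\<close> sigma_pos
      unfolding \<rho>_def L_def g_def by (intro dilation_of_tail_decay) auto
  qed
qed

lemma powr_div_sigma_le_of_quotient:
  assumes y: "0 < y" "y \<le> t" and pos: "\<sigma> y > 0" "\<sigma> t > 0"
    and q: "\<sigma> y / y powr \<gamma> \<le> M * (\<sigma> t / t powr \<gamma>)"
  shows "t powr (\<beta> - 1) / \<sigma> t \<le> M * y powr \<gamma> / \<sigma> y * t powr (- (\<gamma> - \<beta>) - 1)"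
proof -
  have "1 / \<sigma> t \<le> M * y powr \<gamma> / \<sigma> y * t powr (- \<gamma>)"
    using q y pos by (simp add: field_simps powr_minus)
  then have "t powr (\<beta> - 1) / \<sigma> t \<le> t powr (\<beta> - 1) * (M * y powr \<gamma> / \<sigma> y * t powr (- \<gamma>))"
    by (simp add: divide_inverse mult_left_mono)
  also have "\<dots> = M * y powr \<gamma> / \<sigma> y * (t powr (\<beta> - 1) * t powr (- \<gamma>))"
    by (simp add: mult_ac)
  also have "t powr (\<beta> - 1) * t powr (- \<gamma>) = t powr (- (\<gamma> - \<beta>) - 1)"
  proof -
    have "- (\<gamma> - \<beta>) - 1 = (\<beta> - 1) + (- \<gamma>)"
      by simp
    then show ?thesis
      by (simp only: powr_add)
  qed
  finally show ?thesis .
qed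

lemma tail_integral_le_of_quotient_bound:
  assumes \<gamma>: "\<beta> < \<gamma>" and M: "M > 0"
    and q: "\<forall>x\<in>{\<epsilon>..}. \<forall>y\<in>{\<epsilon>..}. x \<le> y \<longrightarrow> \<sigma> x / x powr \<gamma> \<le> M * (\<sigma> y / y powr \<gamma>)"
    and y: "y \<ge> \<epsilon>" and \<epsilon>: "\<epsilon> > 0" and pos_\<epsilon>: "\<forall>x\<ge>\<epsilon>. \<sigma> x > 0"
  defines "\<delta> \<equiv> \<gamma> - \<beta>"
  shows "(\<lambda>t. t powr (\<beta> - 1) / \<sigma> t) integrable_on {y..} \<and>
        integral {y..} (\<lambda>t. t powr (\<beta> - 1) / \<sigma> t) / y powr \<beta> \<le> (M / \<delta>) / \<sigma> y"
proof -
  have \<delta>: "\<delta> > 0"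
    using \<gamma> unfolding \<delta>_def by simp
  have y0: "y > 0" "\<sigma> y > 0"
    using y \<epsilon> pos_\<epsilon> by auto
  define c where "c = M * y powr \<gamma> / \<sigma> y"
  have I: "((\<lambda>t. c * t powr (- \<delta> - 1)) has_integral (c * (y powr (- \<delta>) / \<delta>))) {y..}"
    using has_integral_powr_tail[OF \<delta> y0(1)] by (rule has_integral_mult_right)
  have le: "t powr (\<beta> - 1) / \<sigma> t \<le> c * t powr (- \<delta> - 1)" if t: "y \<le> t" for t
    using powr_div_sigma_le_of_quotient[OF y0(1) t y0(2)] q t y pos_\<epsilon>
    unfolding c_def \<delta>_def by auto
  have int: "(\<lambda>t. t powr (\<beta> - 1) / \<sigma> t) integrable_on {y..}"
    using I le by (intro integrable_powr_div_sigma_tail[OF y0]) blast+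
  have "integral {y..} (\<lambda>t. t powr (\<beta> - 1) / \<sigma> t) \<le> c * (y powr (- \<delta>) / \<delta>)"
    using integral_le[OF int has_integral_integrable[OF I]] le integral_unique[OF I] by auto
  then have "integral {y..} (\<lambda>t. t powr (\<beta> - 1) / \<sigma> t) / y powr \<beta> \<le> c * (y powr (- \<delta>) / \<delta>) / y powr \<beta>"
    by (intro divide_right_mono) auto
  also have "\<dots> = (M / \<delta>) / \<sigma> y"
  proof -
    have "y powr \<gamma> * y powr (- \<delta>) = y powr \<beta>"
      unfolding \<delta>_def by (simp flip: powr_add)
    with y0 \<delta> show ?thesis
      unfolding c_def by (simp add: field_simps)
  qed
  finally show ?thesis
    using int by simp
qed

lemma almost_increasing_quotient_imp_tail_integral_bound:
  assumes almost_increasing_quotient and \<epsilon>: "\<epsilon> > 0" and pos_\<epsilon>: "\<forall>x\<ge>\<epsilon>. \<sigma> x > 0"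
  shows "\<exists>C>0. \<forall>y\<ge>\<epsilon>. (\<lambda>t. t powr (\<beta> - 1) / \<sigma> t) integrable_on {y..} \<and>
                  integral {y..} (\<lambda>t. t powr (\<beta> - 1) / \<sigma> t) / y powr \<beta> \<le> C / \<sigma> y"
proof -
  obtain \<gamma> where \<gamma>: "\<beta> < \<gamma>" "almost_increasing_on {\<epsilon>..} (\<lambda>t. \<sigma> t / t powr \<gamma>)"
    by (rule almost_increasing_quotientE[OF assms(1) \<epsilon>])
  then obtain M where M: "M > 0"
    "\<forall>x\<in>{\<epsilon>..}. \<forall>y\<in>{\<epsilon>..}. x \<le> y \<longrightarrow> \<sigma> x / x powr \<gamma> \<le> M * (\<sigma> y / y powr \<gamma>)"
    unfolding almost_increasing_on_def by blast
  have "M / (\<gamma> - \<beta>) > 0"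
    using \<gamma> M by simp
  moreover note tail_integral_le_of_quotient_bound[OF \<gamma>(1) M]
  ultimately show ?thesis
    using \<epsilon> pos_\<epsilon> by (intro exI[of _ "M / (\<gamma> - \<beta>)"]) auto
qed


lemma tail_sum_le_of_quotient_bound:
  fixes p :: nat
  assumes \<gamma>: "\<beta> < \<gamma>" and M: "M > 0"
    and q: "\<forall>x\<in>{1..}. \<forall>y\<in>{1..}. x \<le> y \<longrightarrow> \<sigma> x / x powr \<gamma> \<le> M * (\<sigma> y / y powr \<gamma>)"
    and p: "1 \<le> p" "a \<le> real p"
  defines "\<delta> \<equiv> \<gamma> - \<beta>"
  shows "summable (\<lambda>j. real (j + p) powr (\<beta> - 1) / \<sigma> (real (j + p))) \<and>
        (\<Sum>j. real (j + p) powr (\<beta> - 1) / \<sigma> (real (j + p)))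
           \<le> M * (2 powr (\<delta> + 1) / \<delta>) * real p powr \<beta> / \<sigma> (real p)"
proof -
  have \<delta>: "\<delta> > 0"
    using \<gamma> unfolding \<delta>_def by simp
  define K where "K = 2 powr (\<delta> + 1) / \<delta>"
  have \<sigma>p: "\<sigma> (real p) > 0"
    using sigma_pos p by auto
  define c where "c = M * real p powr \<gamma> / \<sigma> (real p)"
  \<comment> \<open>the terms are dominated by the differences of \<open>c K (j + p)\<^sup>-\<^sup>\<delta>\<close>, which telescope\<close>
  define G where "G j = c * K * real (j + p) powr (- \<delta>)" for j
  have "G \<longlonglongrightarrow> c * K * 0"
    unfolding G_def using \<delta>
    by (intro tendsto_mult_left tendsto_neg_powr filterlim_real_sequentially[THEN filterlim_compose]
        filterlim_add_const_nat_at_top) auto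
  moreover have "real (j + p) powr (\<beta> - 1) / \<sigma> (real (j + p)) \<le> G j - G (Suc j)" for j
  proof -
    have t: "1 \<le> real (j + p)" "real p \<le> real (j + p)"
      using p by auto
    have "real (j + p) powr (\<beta> - 1) / \<sigma> (real (j + p)) \<le> c * real (j + p) powr (- \<delta> - 1)"
      using powr_div_sigma_le_of_quotient[of "real p" "real (j + p)" \<gamma> M] q t p \<sigma>p sigma_pos
      unfolding c_def \<delta>_def by auto
    also have "\<dots> \<le> c * (K * (real (j + p) powr (- \<delta>) - (real (j + p) + 1) powr (- \<delta>)))"
      unfolding K_def using powr_le_telescoping[OF \<delta> t(1)] M \<sigma>p
      by (intro mult_left_mono) (auto simp: c_def)
    also have "\<dots> = G j - G (Suc j)"
      unfolding G_def by (simp add: algebra_simps)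
    finally show ?thesis .
  qed
  moreover have "0 \<le> real (j + p) powr (\<beta> - 1) / \<sigma> (real (j + p))" for j
    by (intro divide_nonneg_nonneg sigma_nonneg) auto
  ultimately have "summable (\<lambda>j. real (j + p) powr (\<beta> - 1) / \<sigma> (real (j + p)))"
    "(\<Sum>j. real (j + p) powr (\<beta> - 1) / \<sigma> (real (j + p))) \<le> G 0"
    using suminf_le_telescoping[of G] by auto
  moreover have "G 0 = M * K * real p powr \<beta> / \<sigma> (real p)"
  proof -
    have "real p powr \<gamma> * real p powr (- \<delta>) = real p powr \<beta>"
      unfolding \<delta>_def by (simp flip: powr_add)
    then show ?thesis
      unfolding G_def c_def by (simp add: field_simps)
  qed
  ultimately show ?thesis
    unfolding K_def[symmetric] by simp
qed

lemma almost_increasing_quotient_imp_tail_sum_bound: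
  assumes almost_increasing_quotient
  shows "\<exists>C>0. \<forall>p::nat. 1 \<le> p \<and> a \<le> real p \<longrightarrow>
              summable (\<lambda>j. real (j + p) powr (\<beta> - 1) / \<sigma> (real (j + p))) \<and>
              (\<Sum>j. real (j + p) powr (\<beta> - 1) / \<sigma> (real (j + p))) \<le> C * real p powr \<beta> / \<sigma> (real p)"
proof -
  obtain \<gamma> where \<gamma>: "\<beta> < \<gamma>" "almost_increasing_on {1..} (\<lambda>t. \<sigma> t / t powr \<gamma>)"
    by (rule almost_increasing_quotientE[OF assms zero_less_one])
  then obtain M where M: "M > 0"
    "\<forall>x\<in>{1..}. \<forall>y\<in>{1..}. x \<le> y \<longrightarrow> \<sigma> x / x powr \<gamma> \<le> M * (\<sigma> y / y powr \<gamma>)"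
    unfolding almost_increasing_on_def by blast
  have "M * (2 powr (\<gamma> - \<beta> + 1) / (\<gamma> - \<beta>)) > 0"
    using \<gamma> M by simp
  moreover note tail_sum_le_of_quotient_bound[OF \<gamma>(1) M]
  ultimately show ?thesis
    by (intro exI[of _ "M * (2 powr (\<gamma> - \<beta> + 1) / (\<gamma> - \<beta>))"]) auto
qed


lemma partial_integral_bound_iff:
  "(\<exists>C>0. \<forall>y\<ge>1. integral {1..y} (\<lambda>t. \<sigma> t / t powr (\<beta> + 1)) \<le> C * \<sigma> y / y powr \<beta>)
     \<longleftrightarrow> almost_increasing_quotient"
  using partial_integral_bound_imp_dilation_gain dilation_gain_imp_almost_increasing_quotient
    almost_increasing_quotient_imp_partial_integral_bound by blast

lemma liminf_ratio_tendsto_iff: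
  "((\<lambda>k. Liminf at_top (\<lambda>t. ereal (\<sigma> (k * t) / (k powr \<beta> * \<sigma> t)))) \<longlongrightarrow> \<infinity>) at_top
     \<longleftrightarrow> almost_increasing_quotient"
  using liminf_ratio_tendsto_imp_dilation_gain dilation_gain_imp_almost_increasing_quotient
    almost_increasing_quotient_imp_liminf_ratio_tendsto by blast

lemma liminf_ratio_iff:
  "(\<exists>K>1. Liminf at_top (\<lambda>t. ereal (\<sigma> (K * t) / \<sigma> t)) > ereal (K powr \<beta>))
     \<longleftrightarrow> almost_increasing_quotient"
  using liminf_ratio_imp_dilation_gain dilation_gain_imp_almost_increasing_quotient
    almost_increasing_quotient_imp_liminf_ratio by blast

lemma lower_matuszewska_iff:
  "lower_matuszewska \<sigma> > ereal \<beta> \<longleftrightarrow> almost_increasing_quotient"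
  using lower_matuszewska_imp_dilation_gain dilation_gain_imp_almost_increasing_quotient
    almost_increasing_quotient_imp_lower_matuszewska by blast

lemma almost_increasing_iff:
  "(\<exists>\<gamma>>\<beta>. if a > 0 then almost_increasing_on {a..} (\<lambda>t. \<sigma> t / t powr \<gamma>)
              else (\<forall>\<epsilon>>0. almost_increasing_on {\<epsilon>..} (\<lambda>t. \<sigma> t / t powr \<gamma>)))
     \<longleftrightarrow> almost_increasing_quotient"
proof
  assume "\<exists>\<gamma>>\<beta>. if a > 0 then almost_increasing_on {a..} (\<lambda>t. \<sigma> t / t powr \<gamma>)
              else (\<forall>\<epsilon>>0. almost_increasing_on {\<epsilon>..} (\<lambda>t. \<sigma> t / t powr \<gamma>))"
  then obtain \<gamma> where \<gamma>: "\<gamma> > \<beta>" and ai: "if a > 0 then almost_increasing_on {a..} (\<lambda>t. \<sigma> t / t powr \<gamma>)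
              else (\<forall>\<epsilon>>0. almost_increasing_on {\<epsilon>..} (\<lambda>t. \<sigma> t / t powr \<gamma>))"
    by blast
  have "\<gamma> \<ge> 0"
    using \<gamma> beta_nonneg by simp
  with ai have "\<forall>\<epsilon>>0. almost_increasing_on {\<epsilon>..} (\<lambda>t. \<sigma> t / t powr \<gamma>)"
    by (cases "a > 0") (auto intro: almost_increasing_quotient_extend)
  with \<gamma> show almost_increasing_quotient
    unfolding almost_increasing_quotient_def by blast
next
  assume almost_increasing_quotient
  then obtain \<gamma> where "\<gamma> > \<beta>" "\<forall>\<epsilon>>0. almost_increasing_on {\<epsilon>..} (\<lambda>t. \<sigma> t / t powr \<gamma>)"
    unfolding almost_increasing_quotient_def by blast
  then show "\<exists>\<gamma>>\<beta>. if a > 0 then almost_increasing_on {a..} (\<lambda>t. \<sigma> t / t powr \<gamma>)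
              else (\<forall>\<epsilon>>0. almost_increasing_on {\<epsilon>..} (\<lambda>t. \<sigma> t / t powr \<gamma>))"
    by auto
qed

lemma tail_integral_bound_iff:
  "(if a > 0 then
      (\<exists>C>0. \<forall>y\<ge>a. (\<lambda>t. t powr (\<beta> - 1) / \<sigma> t) integrable_on {y..} \<and>
         integral {y..} (\<lambda>t. t powr (\<beta> - 1) / \<sigma> t) / y powr \<beta> \<le> C / \<sigma> y)
    else (\<forall>\<epsilon>>0. \<exists>C>0. \<forall>y\<ge>\<epsilon>. (\<lambda>t. t powr (\<beta> - 1) / \<sigma> t) integrable_on {y..} \<and>
         integral {y..} (\<lambda>t. t powr (\<beta> - 1) / \<sigma> t) / y powr \<beta> \<le> C / \<sigma> y))
     \<longleftrightarrow> almost_increasing_quotient"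
  (is "?tail \<longleftrightarrow> _")
proof -
  define bound where "bound \<epsilon> \<longleftrightarrow> (\<exists>C>0. \<forall>y\<ge>\<epsilon>. (\<lambda>t. t powr (\<beta> - 1) / \<sigma> t) integrable_on {y..} \<and>
         integral {y..} (\<lambda>t. t powr (\<beta> - 1) / \<sigma> t) / y powr \<beta> \<le> C / \<sigma> y)" for \<epsilon>
  have bound_iff: "bound \<epsilon> \<longleftrightarrow> almost_increasing_quotient" if "\<epsilon> > 0" "\<forall>x\<ge>\<epsilon>. \<sigma> x > 0" for \<epsilon>
    unfolding bound_def
    using tail_integral_bound_imp_dilation_gain[OF that] dilation_gain_imp_almost_increasing_quotient
      almost_increasing_quotient_imp_tail_integral_bound[OF _ that] by blast
  have "?tail \<longleftrightarrow> (if a > 0 then bound a else (\<forall>\<epsilon>>0. bound \<epsilon>))"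
    unfolding bound_def ..
  also have "\<dots> \<longleftrightarrow> almost_increasing_quotient"
  proof (cases "a > 0")
    case True
    with pos bound_iff[of a] show ?thesis
      by simp
  next
    case False
    with pos have "\<forall>x\<ge>\<epsilon>. \<sigma> x > 0" if "\<epsilon> > 0" for \<epsilon>
      using that by auto
    with False bound_iff show ?thesis
      by (metis zero_less_one)
  qed
  finally show ?thesis .
qed

lemma tail_sum_bound_iff:
  "(\<exists>C>0. \<forall>p::nat. 1 \<le> p \<and> a \<le> real p \<longrightarrow>
      summable (\<lambda>j. real (j + p) powr (\<beta> - 1) / \<sigma> (real (j + p))) \<and>
      (\<Sum>j. real (j + p) powr (\<beta> - 1) / \<sigma> (real (j + p))) \<le> C * real p powr \<beta> / \<sigma> (real p))
     \<longleftrightarrow> almost_increasing_quotient"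
  using tail_sum_bound_imp_dilation_gain dilation_gain_imp_almost_increasing_quotient
    almost_increasing_quotient_imp_tail_sum_bound by blast

lemma integer_dilation_iff:
  "(\<forall>\<theta>. 0 < \<theta> \<and> \<theta> < 1 \<longrightarrow> (\<exists>k::nat. 2 \<le> k \<and>
      (\<forall>p::nat. 1 \<le> p \<longrightarrow> \<sigma> (real p) \<le> \<theta> * real k powr (- \<beta>) * \<sigma> (real k * real p))))
     \<longleftrightarrow> almost_increasing_quotient"
  using integer_dilation_imp_dilation_gain dilation_gain_imp_almost_increasing_quotient
    almost_increasing_quotient_imp_integer_dilation by blast

lemma integer_liminf_ratio_iff:
  "(\<exists>k::nat. 2 \<le> k \<and>
      Liminf sequentially (\<lambda>p::nat. ereal (\<sigma> (real k * real p) / \<sigma> (real p))) > ereal (real k powr \<beta>))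
     \<longleftrightarrow> almost_increasing_quotient"
  using integer_liminf_ratio_imp_dilation_gain dilation_gain_imp_almost_increasing_quotient
    almost_increasing_quotient_imp_integer_dilation integer_dilation_imp_integer_liminf_ratio by blast

lemma partial_sum_bound_iff:
  "(\<exists>C>0. \<forall>p::nat. 1 \<le> p \<longrightarrow>
      (\<Sum>k=1..p. \<sigma> (real k) / real k powr (1 + \<beta>)) \<le> C * \<sigma> (real p) / real p powr \<beta>)
     \<longleftrightarrow> almost_increasing_quotient"
  using partial_sum_bound_imp_dilation_gain dilation_gain_imp_almost_increasing_quotient
    almost_increasing_quotient_imp_partial_sum_bound by blast

end

theorem theorem2p16:
  fixes \<sigma> :: "real \<Rightarrow> real" and \<beta> a :: real
  assumes mono: "mono_on {0..} \<sigma>"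
    and nonneg: "\<forall>x\<ge>0. \<sigma> x \<ge> 0"
    and lim: "filterlim \<sigma> at_top at_top"
    and beta: "\<beta> \<ge> 0"
    and a: "a \<ge> 0"
    and pos: "\<forall>x\<ge>a. \<sigma> x > 0"
    and zero: "\<forall>x. 0 \<le> x \<and> x \<le> of_int (ceiling a) - 1 \<longrightarrow> \<sigma> x = 0"
  defines "P1 \<equiv> (\<exists>C>0. \<forall>y\<ge>1.
              integral {1..y} (\<lambda>t. \<sigma> t / t powr (\<beta> + 1)) \<le> C * \<sigma> y / y powr \<beta>)"
    and "P2 \<equiv> ((\<lambda>k. Liminf at_top (\<lambda>t. ereal (\<sigma> (k * t) / (k powr \<beta> * \<sigma> t))))
                \<longlongrightarrow> \<infinity>) at_top"
    and "P3 \<equiv> (\<exists>K>1. Liminf at_top (\<lambda>t. ereal (\<sigma> (K * t) / \<sigma> t)) > ereal (K powr \<beta>))"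
    and "P4 \<equiv> lower_matuszewska \<sigma> > ereal \<beta>"
    and "P5 \<equiv> (\<exists>\<gamma>>\<beta>. if a > 0 then almost_increasing_on {a..} (\<lambda>t. \<sigma> t / t powr \<gamma>)
                  else (\<forall>\<epsilon>>0. almost_increasing_on {\<epsilon>..} (\<lambda>t. \<sigma> t / t powr \<gamma>)))"
    and "P6 \<equiv> (if a > 0 then
               (\<exists>C>0. \<forall>y\<ge>a. (\<lambda>t. t powr (\<beta> - 1) / \<sigma> t) integrable_on {y..} \<and>
                  integral {y..} (\<lambda>t. t powr (\<beta> - 1) / \<sigma> t) / y powr \<beta> \<le> C / \<sigma> y)
             else (\<forall>\<epsilon>>0. \<exists>C>0. \<forall>y\<ge>\<epsilon>. (\<lambda>t. t powr (\<beta> - 1) / \<sigma> t) integrable_on {y..} \<and>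
                  integral {y..} (\<lambda>t. t powr (\<beta> - 1) / \<sigma> t) / y powr \<beta> \<le> C / \<sigma> y))"
    and "P7 \<equiv> (\<exists>C>0. \<forall>p::nat. 1 \<le> p \<and> a \<le> real p \<longrightarrow>
              summable (\<lambda>j. real (j + p) powr (\<beta> - 1) / \<sigma> (real (j + p))) \<and>
              (\<Sum>j. real (j + p) powr (\<beta> - 1) / \<sigma> (real (j + p)))
                 \<le> C * real p powr \<beta> / \<sigma> (real p))"
    and "P8 \<equiv> (\<forall>\<theta>. 0 < \<theta> \<and> \<theta> < 1 \<longrightarrow> (\<exists>k::nat. 2 \<le> k \<and>
              (\<forall>p::nat. 1 \<le> p \<longrightarrow>
                 \<sigma> (real p) \<le> \<theta> * real k powr (- \<beta>) * \<sigma> (real k * real p))))"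
    and "P9 \<equiv> (\<exists>k::nat. 2 \<le> k \<and>
              Liminf sequentially (\<lambda>p::nat. ereal (\<sigma> (real k * real p) / \<sigma> (real p)))
                > ereal (real k powr \<beta>))"
    and "P10 \<equiv> (\<exists>C>0. \<forall>p::nat. 1 \<le> p \<longrightarrow>
              (\<Sum>k=1..p. \<sigma> (real k) / real k powr (1 + \<beta>)) \<le> C * \<sigma> (real p) / real p powr \<beta>)"
  shows "(P1 \<longleftrightarrow> P2) \<and> (P1 \<longleftrightarrow> P3) \<and> (P1 \<longleftrightarrow> P4) \<and> (P1 \<longleftrightarrow> P5) \<and> (P1 \<longleftrightarrow> P6) \<and>
         (P1 \<longleftrightarrow> P7) \<and> (P1 \<longleftrightarrow> P8) \<and> (P1 \<longleftrightarrow> P9) \<and> (P1 \<longleftrightarrow> P10)"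
proof -
  interpret growth_function \<sigma> \<beta> a
    using mono nonneg beta pos by unfold_locales
  have "P1 \<longleftrightarrow> almost_increasing_quotient"
    unfolding P1_def by (rule partial_integral_bound_iff)
  moreover have "P2 \<longleftrightarrow> almost_increasing_quotient"
    unfolding P2_def by (rule liminf_ratio_tendsto_iff)
  moreover have "P3 \<longleftrightarrow> almost_increasing_quotient"
    unfolding P3_def by (rule liminf_ratio_iff)
  moreover have "P4 \<longleftrightarrow> almost_increasing_quotient"
    unfolding P4_def by (rule lower_matuszewska_iff)
  moreover have "P5 \<longleftrightarrow> almost_increasing_quotient"
    unfolding P5_def by (rule almost_increasing_iff)
  moreover have "P6 \<longleftrightarrow> almost_increasing_quotient"
    unfolding P6_def by (rule tail_integral_bound_iff)
  moreover have "P7 \<longleftrightarrow> almost_increasing_quotient"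
    unfolding P7_def by (rule tail_sum_bound_iff)
  moreover have "P8 \<longleftrightarrow> almost_increasing_quotient"
    unfolding P8_def by (rule integer_dilation_iff)
  moreover have "P9 \<longleftrightarrow> almost_increasing_quotient"
    unfolding P9_def by (rule integer_liminf_ratio_iff)
  moreover have "P10 \<longleftrightarrow> almost_increasing_quotient"
    unfolding P10_def by (rule partial_sum_bound_iff)
  ultimately show ?thesis
    by blast
qed

end
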